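(* Let $\mathfrak{G}$ be a right-angled graph of groups satisfying conditions (i)–(iv) below, with underlying abstract graph $(V,E,\bar\cdot,s,t)$, and let $\omega\in V$. Conditions: (i) for every vertex $u$, every factor $G$ of $G_u$ and every loop $c$ based at $u$, $\varphi_c(G)\in\{\emptyset,G\}$; (ii) there do not exist vertices $u,v$, oriented paths $\alpha,\beta$ from $u$ to $v$, commuting factors $A_1,A_2$ of $G_u$ and non-commuting factors $B_1,B_2$ of $G_v$ with $\varphi_\alpha(A_1)=B_1$ and $\varphi_\beta(A_2)=B_2$; (iii) no arrow $e$ satisfies $s(e)=t(e)$; (iv) $\Phi(G)=\{\mathrm{Id}\}$ for every factor $G$. For vertices $a\in V(\Gamma_u)$, $b\in V(\Gamma_v)$ write $a\sim b$ if there is an arrow $e$ from $u$ to $v$ such that $\varphi_e$ sends the factor indexed by $a$ to the factor indexed by $b$, and let $\Psi_0$ be the quotient of the disjoint union $\bigsqcup_{u\in V}\Gamma_u$ by the equivalence relation generated by $\sim$ (two classes being adjacent if they have adjacent representatives). Let $\Psi$ be the simplicial graph obtained from $\Psi_0$ by adding one new vertex $x_{\{e,\bar e\}}$ for each pair of arrows $\{e,\bar e\}$, adjacent to the classes of all vertices of $\Gamma_{s(e)}$ indexing factors contained in $\iota_e(G_e)$ (equivalently, of $\Gamma_{t(e)}$ indexing factors contained in $\iota_{\bar e}(G_e)$). Let $\mathcal{G}$ be the collection of groups indexed by $V(\Psi)$ in which the class of a vertex of $\Gamma_u$ is labelled by the corresponding factor (well defined up to isomorphism) and each new vertex $x_{\{e,\bar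 e\}}$ by $\mathbb{Z}/2\mathbb{Z}$. Then $\mathfrak{F}_\omega$ embeds into the graph product $\Psi\mathcal{G}$.
   Context: An abstract graph consists of a set $V$ of vertices, a set $E$ of arrows, a fixed-point-free involution $e\mapsto\bar e$ on $E$, and maps $s,t:E\to V$ with $t(e)=s(\bar e)$; it is assumed connected; a loop based at $u$ is an oriented path of arrows from $u$ to $u$. A right-angled graph of groups $\mathfrak{G}$ consists of an abstract graph, for each $v\in V$ a group $G_v$ with a fixed decomposition as a graph product $\Gamma_v\mathcal{G}_v$ (over a simplicial graph $\Gamma_v$ with non-trivial vertex-groups), for each $e\in E$ a group $G_e=G_{\bar e}$ with a fixed decomposition as a graph product, and monomorphisms $\iota_e:G_e\hookrightarrow G_{s(e)}$ which are graphical embeddings: there is an embedding $f$ of the graph of $G_e$ onto an induced subgraph of $\Gamma_{s(e)}$ such that $\iota_e$ restricts to an isomorphism from each vertex-group of $G_e$ onto the vertex-group of $G_{s(e)}$ indexed by the image under $f$ of its vertex. (A graph product $\Gamma\mathcal{G}$ is the quotient of $\ast_u G_u$ by $[g,h]=1$ for $g\in G_u,h\in G_v$, $\{u,v\}\in E(\Gamma)$.) The factors of $G_v$ are the vertex-groups of its fixed graph product decomposition; two factors of $G_v$ commute if they are distinct and indexed by adjacent vertices of $\Gamma_v$, and are non-commuting if they are distinct and indexed by non-adjacent vertices. The fundamental groupoid $\mathfrak{F}$ is the groupoid with object set $V$ generated by the arrows $e\in E$ (morphisms from $s(e)$ to $t(e)$) and the elements of each $G_v$ (morphisms from $v$ to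 $v$), subject to the relations of each $G_v$, $\bar e=e^{-1}$, and $\iota_e(g)\cdot e=e\cdot\iota_{\bar e}(g)$ for $e\in E$, $g\in G_e$. $\mathfrak{F}_\omega$ is the group of morphisms from $\omega$ to $\omega$ (the fundamental group of $\mathfrak{G}$). For an arrow $e$ and a factor $A$ of $G_{s(e)}$, set $\varphi_e(A):=\iota_{\bar e}(\iota_e^{-1}(A))$ (a factor of $G_{t(e)}$) if $A\subset\iota_e(G_e)$ and $\varphi_e(A):=\emptyset$ otherwise, with $\varphi_e(\emptyset)=\emptyset$; on elements, $\varphi_e=\iota_{\bar e}\circ\iota_e^{-1}$. For an oriented path $\gamma=e_1\cdots e_n$, $\varphi_\gamma:=\varphi_{e_n}\circ\cdots\circ\varphi_{e_1}$. For a factor $G$ of $G_u$, $\Phi(G):=\{\varphi_c|_G\mid c \text{ a loop based at } u \text{ with } \varphi_c(G)=G\}\leq\mathrm{Aut}(G)$. *)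

theory Defs
  imports "HOL-Algebra.Algebra"
begin

definition qrel :: "'w list set \<Rightarrow> ('w list \<Rightarrow> 'w list \<Rightarrow> bool) \<Rightarrow> 'w list \<Rightarrow> 'w list \<Rightarrow> bool" where
  "qrel W st = (\<lambda>x y. x \<in> W \<and> y \<in> W \<and> (st x y \<or> st y x))\<^sup>*\<^sup>*"

definition qclass :: "'w list set \<Rightarrow> ('w list \<Rightarrow> 'w list \<Rightarrow> bool) \<Rightarrow> 'w list \<Rightarrow> 'w list set" where
  "qclass W st w = {w' \<in> W. qrel W st w w'}"

definition quot_monoid :: "'w list set \<Rightarrow> ('w list \<Rightarrow> 'w list \<Rightarrow> bool) \<Rightarrow> 'w list set monoid" where
  "quot_monoid W st =
     \<lparr>carrier = qclass W st ` W,
      monoid.mult = (\<lambda>A B. {w \<in> W. \<exists>x\<in>A. \<exists>y\<in>B. qrel W st (x @ y) w}),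
      monoid.one = qclass W st []\<rparr>"

definition rewrite_step :: "('w list \<Rightarrow> 'w list \<Rightarrow> bool) \<Rightarrow> 'w list \<Rightarrow> 'w list \<Rightarrow> bool" where
  "rewrite_step basic w1 w2 = (\<exists>u l r v. basic l r \<and> w1 = u @ l @ v \<and> w2 = u @ r @ v)"

definition simplicial :: "'i set \<Rightarrow> ('i \<Rightarrow> 'i \<Rightarrow> bool) \<Rightarrow> bool" where
  "simplicial I adj = (\<forall>a b. adj a b \<longrightarrow> a \<in> I \<and> b \<in> I \<and> a \<noteq> b \<and> adj b a)"

definition gp_words :: "'i set \<Rightarrow> ('i \<Rightarrow> 'x monoid) \<Rightarrow> ('i \<times> 'x) list set" where
  "gp_words I F = {w. \<forall>p \<in> set w. fst p \<in> I \<and> snd p \<in> carrier (F (fst p))}"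

definition gp_basic :: "'i set \<Rightarrow> ('i \<Rightarrow> 'i \<Rightarrow> bool) \<Rightarrow> ('i \<Rightarrow> 'x monoid)
    \<Rightarrow> ('i \<times> 'x) list \<Rightarrow> ('i \<times> 'x) list \<Rightarrow> bool" where
  "gp_basic I adj F l r =
     ((\<exists>a\<in>I. \<exists>x\<in>carrier (F a). \<exists>y\<in>carrier (F a).
         l = [(a, x), (a, y)] \<and> r = [(a, x \<otimes>\<^bsub>F a\<^esub> y)]) \<or>
      (\<exists>a\<in>I. l = [(a, \<one>\<^bsub>F a\<^esub>)] \<and> r = []) \<or>
      (\<exists>a\<in>I. \<exists>b\<in>I. adj a b \<and> (\<exists>x\<in>carrier (F a). \<exists>y\<in>carrier (F b).
         l = [(a, x), (b, y)] \<and> r = [(b, y), (a, x)])))"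

text \<open>The graph product: free product of the vertex groups (presented by their multiplication
tables) modulo commutation of adjacent vertex groups.\<close>

definition graph_product :: "'i set \<Rightarrow> ('i \<Rightarrow> 'i \<Rightarrow> bool) \<Rightarrow> ('i \<Rightarrow> 'x monoid)
    \<Rightarrow> ('i \<times> 'x) list set monoid" where
  "graph_product I adj F = quot_monoid (gp_words I F) (rewrite_step (gp_basic I adj F))"

definition gp_factor :: "'i set \<Rightarrow> ('i \<Rightarrow> 'i \<Rightarrow> bool) \<Rightarrow> ('i \<Rightarrow> 'x monoid) \<Rightarrow> 'i
    \<Rightarrow> ('i \<times> 'x) list set set" where
  "gp_factor I adj F a =
     (\<lambda>x. qclass (gp_words I F) (rewrite_step (gp_basic I adj F)) [(a, x)]) ` carrier (F a)"

definition transport :: "('x \<Rightarrow> 'y) \<Rightarrow> 'x monoid \<Rightarrow> 'y monoid" where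
  "transport f G =
     \<lparr>carrier = f ` carrier G,
      monoid.mult = (\<lambda>x y. f (inv_into (carrier G) f x \<otimes>\<^bsub>G\<^esub> inv_into (carrier G) f y)),
      monoid.one = f \<one>\<^bsub>G\<^esub>\<rparr>"

record ('v, 'e, 'a, 'g) ragg =
  Vs :: "'v set"
  Es :: "'e set"
  bar :: "'e \<Rightarrow> 'e"
  src :: "'e \<Rightarrow> 'v"
  tgt :: "'e \<Rightarrow> 'v"
  VGam :: "'v \<Rightarrow> 'a set"
  adjG :: "'v \<Rightarrow> 'a \<Rightarrow> 'a \<Rightarrow> bool"
  FV :: "'v \<Rightarrow> 'a \<Rightarrow> 'g monoid"         \<comment> \<open>vertex groups of G_u\<close>
  VEdg :: "'e \<Rightarrow> 'a set"                 \<comment> \<open>vertices of the graph of G_e\<close>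
  adjE :: "'e \<Rightarrow> 'a \<Rightarrow> 'a \<Rightarrow> bool"
  FE :: "'e \<Rightarrow> 'a \<Rightarrow> 'g monoid"
  iota :: "'e \<Rightarrow> ('a \<times> 'g) list set \<Rightarrow> ('a \<times> 'g) list set"

definition Gv :: "('v, 'e, 'a, 'g) ragg \<Rightarrow> 'v \<Rightarrow> ('a \<times> 'g) list set monoid" where
  "Gv R u = graph_product (VGam R u) (adjG R u) (FV R u)"

definition Ge :: "('v, 'e, 'a, 'g) ragg \<Rightarrow> 'e \<Rightarrow> ('a \<times> 'g) list set monoid" where
  "Ge R e = graph_product (VEdg R e) (adjE R e) (FE R e)"

definition factor :: "('v, 'e, 'a, 'g) ragg \<Rightarrow> 'v \<Rightarrow> 'a \<Rightarrow> ('a \<times> 'g) list set set" where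
  "factor R u a = gp_factor (VGam R u) (adjG R u) (FV R u) a"

definition efactor :: "('v, 'e, 'a, 'g) ragg \<Rightarrow> 'e \<Rightarrow> 'a \<Rightarrow> ('a \<times> 'g) list set set" where
  "efactor R e b = gp_factor (VEdg R e) (adjE R e) (FE R e) b"

fun arrow_path :: "('v, 'e, 'a, 'g) ragg \<Rightarrow> 'e list \<Rightarrow> 'v \<Rightarrow> 'v \<Rightarrow> bool" where
  "arrow_path R [] u v = (u = v)"
| "arrow_path R (e # p) u v = (e \<in> Es R \<and> src R e = u \<and> arrow_path R p (tgt R e) v)"

definition graphical_embedding :: "('v, 'e, 'a, 'g) ragg \<Rightarrow> 'e \<Rightarrow> bool" where
  "graphical_embedding R e =
     (iota R e \<in> hom (Ge R e) (Gv R (src R e)) \<and> inj_on (iota R e) (carrier (Ge R e)) \<and>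
      (\<exists>f. inj_on f (VEdg R e) \<and> f ` VEdg R e \<subseteq> VGam R (src R e) \<and>
           (\<forall>a\<in>VEdg R e. \<forall>b\<in>VEdg R e. adjE R e a b \<longleftrightarrow> adjG R (src R e) (f a) (f b)) \<and>
           (\<forall>b\<in>VEdg R e. bij_betw (iota R e) (efactor R e b) (factor R (src R e) (f b)))))"

definition is_ragg :: "('v, 'e, 'a, 'g) ragg \<Rightarrow> bool" where
  "is_ragg R =
     ((\<forall>e\<in>Es R. bar R e \<in> Es R \<and> bar R e \<noteq> e \<and> bar R (bar R e) = e \<and>
                 src R e \<in> Vs R \<and> tgt R e \<in> Vs R \<and> tgt R e = src R (bar R e)) \<and>
      (\<forall>u\<in>Vs R. \<forall>v\<in>Vs R. \<exists>p. arrow_path R p u v) \<and>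
      (\<forall>u\<in>Vs R. simplicial (VGam R u) (adjG R u) \<and>
         (\<forall>a\<in>VGam R u. group (FV R u a) \<and> carrier (FV R u a) \<noteq> {\<one>\<^bsub>FV R u a\<^esub>})) \<and>
      (\<forall>e\<in>Es R. simplicial (VEdg R e) (adjE R e) \<and>
         (\<forall>b\<in>VEdg R e. group (FE R e b) \<and> carrier (FE R e b) \<noteq> {\<one>\<^bsub>FE R e b\<^esub>}) \<and>
         VEdg R (bar R e) = VEdg R e \<and> adjE R (bar R e) = adjE R e \<and>
         (\<forall>b\<in>VEdg R e. FE R (bar R e) b = FE R e b)) \<and>
      (\<forall>e\<in>Es R. graphical_embedding R e))"

definition phiset :: "('v, 'e, 'a, 'g) ragg \<Rightarrow> 'e \<Rightarrow> ('a \<times> 'g) list set set \<Rightarrow> ('a \<times> 'g) list set set" where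
  "phiset R e A =
     (if A \<subseteq> iota R e ` carrier (Ge R e)
      then iota R (bar R e) ` (iota R e -` A \<inter> carrier (Ge R e)) else {})"

definition phiset_path :: "('v, 'e, 'a, 'g) ragg \<Rightarrow> 'e list \<Rightarrow> ('a \<times> 'g) list set set \<Rightarrow> ('a \<times> 'g) list set set" where
  "phiset_path R p = fold (phiset R) p"

definition phielt :: "('v, 'e, 'a, 'g) ragg \<Rightarrow> 'e \<Rightarrow> ('a \<times> 'g) list set \<Rightarrow> ('a \<times> 'g) list set" where
  "phielt R e g = iota R (bar R e) (inv_into (carrier (Ge R e)) (iota R e) g)"

definition phielt_path :: "('v, 'e, 'a, 'g) ragg \<Rightarrow> 'e list \<Rightarrow> ('a \<times> 'g) list set \<Rightarrow> ('a \<times> 'g) list set" where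
  "phielt_path R p = fold (phielt R) p"

definition Phi :: "('v, 'e, 'a, 'g) ragg \<Rightarrow> 'v \<Rightarrow> ('a \<times> 'g) list set set
    \<Rightarrow> (('a \<times> 'g) list set \<Rightarrow> ('a \<times> 'g) list set) set" where
  "Phi R u G = {restrict (phielt_path R c) G | c. arrow_path R c u u \<and> phiset_path R c G = G}"

definition cond_i :: "('v, 'e, 'a, 'g) ragg \<Rightarrow> bool" where
  "cond_i R = (\<forall>u\<in>Vs R. \<forall>a\<in>VGam R u. \<forall>c. arrow_path R c u u \<longrightarrow>
                 phiset_path R c (factor R u a) \<in> {{}, factor R u a})"

definition cond_ii :: "('v, 'e, 'a, 'g) ragg \<Rightarrow> bool" where
  "cond_ii R = (\<not> (\<exists>u\<in>Vs R. \<exists>v\<in>Vs R. \<exists>\<alpha> \<beta>. arrow_path R \<alpha> u v \<and> arrow_path R \<beta> u v \<and>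
       (\<exists>a1\<in>VGam R u. \<exists>a2\<in>VGam R u. a1 \<noteq> a2 \<and> adjG R u a1 a2 \<and>
        (\<exists>b1\<in>VGam R v. \<exists>b2\<in>VGam R v. b1 \<noteq> b2 \<and> \<not> adjG R v b1 b2 \<and>
          phiset_path R \<alpha> (factor R u a1) = factor R v b1 \<and>
          phiset_path R \<beta> (factor R u a2) = factor R v b2))))"

definition cond_iii :: "('v, 'e, 'a, 'g) ragg \<Rightarrow> bool" where
  "cond_iii R = (\<forall>e\<in>Es R. src R e \<noteq> tgt R e)"

definition cond_iv :: "('v, 'e, 'a, 'g) ragg \<Rightarrow> bool" where
  "cond_iv R = (\<forall>u\<in>Vs R. \<forall>a\<in>VGam R u. Phi R u (factor R u a) = {restrict id (factor R u a)})"

datatype ('v, 'e, 'x) gletter = Arr 'e | Elt 'v 'x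

fun word_path :: "('v, 'e, 'a, 'g) ragg \<Rightarrow> 'v \<Rightarrow> 'v
    \<Rightarrow> ('v, 'e, ('a \<times> 'g) list set) gletter list \<Rightarrow> bool" where
  "word_path R u v [] = (u = v)"
| "word_path R u v (Arr e # w) = (e \<in> Es R \<and> src R e = u \<and> word_path R (tgt R e) v w)"
| "word_path R u v (Elt x g # w) =
     (x = u \<and> u \<in> Vs R \<and> g \<in> carrier (Gv R u) \<and> word_path R u v w)"

definition groupoid_basic :: "('v, 'e, 'a, 'g) ragg
    \<Rightarrow> ('v, 'e, ('a \<times> 'g) list set) gletter list \<Rightarrow> ('v, 'e, ('a \<times> 'g) list set) gletter list \<Rightarrow> bool" where
  "groupoid_basic R l r =
     ((\<exists>u\<in>Vs R. \<exists>x\<in>carrier (Gv R u). \<exists>y\<in>carrier (Gv R u).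
         l = [Elt u x, Elt u y] \<and> r = [Elt u (x \<otimes>\<^bsub>Gv R u\<^esub> y)]) \<or>
      (\<exists>u\<in>Vs R. l = [Elt u \<one>\<^bsub>Gv R u\<^esub>] \<and> r = []) \<or>
      (\<exists>e\<in>Es R. l = [Arr e, Arr (bar R e)] \<and> r = []) \<or>
      (\<exists>e\<in>Es R. \<exists>g\<in>carrier (Ge R e).
         l = [Elt (src R e) (iota R e g), Arr e] \<and> r = [Arr e, Elt (tgt R e) (iota R (bar R e) g)]))"

text \<open>Morphisms \<omega> \<rightarrow> \<omega> of the fundamental groupoid: paths from \<omega> to \<omega> in the generators,
modulo the congruence generated by the relations (all intermediate words being such paths).\<close>

definition fund_group :: "('v, 'e, 'a, 'g) ragg \<Rightarrow> 'v
    \<Rightarrow> ('v, 'e, ('a \<times> 'g) list set) gletter list set monoid" where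
  "fund_group R \<omega> = quot_monoid {w. word_path R \<omega> \<omega> w} (rewrite_step (groupoid_basic R))"

definition sim :: "('v, 'e, 'a, 'g) ragg \<Rightarrow> 'v \<times> 'a \<Rightarrow> 'v \<times> 'a \<Rightarrow> bool" where
  "sim R p q = (\<exists>e\<in>Es R. fst p = src R e \<and> fst q = tgt R e \<and>
       snd p \<in> VGam R (src R e) \<and> snd q \<in> VGam R (tgt R e) \<and>
       phiset R e (factor R (src R e) (snd p)) = factor R (tgt R e) (snd q))"

definition psi_class :: "('v, 'e, 'a, 'g) ragg \<Rightarrow> 'v \<times> 'a \<Rightarrow> ('v \<times> 'a) set" where
  "psi_class R p = {q. (\<lambda>x y. sim R x y \<or> sim R y x)\<^sup>*\<^sup>* p q}"

definition disj_union :: "('v, 'e, 'a, 'g) ragg \<Rightarrow> ('v \<times> 'a) set" where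
  "disj_union R = {(u, a). u \<in> Vs R \<and> a \<in> VGam R u}"

definition Psi_V :: "('v, 'e, 'a, 'g) ragg \<Rightarrow> (('v \<times> 'a) set + 'e set) set" where
  "Psi_V R = Inl ` (psi_class R ` disj_union R) \<union> Inr ` ((\<lambda>e. {e, bar R e}) ` Es R)"

definition edge_adj :: "('v, 'e, 'a, 'g) ragg \<Rightarrow> 'e set \<Rightarrow> ('v \<times> 'a) set \<Rightarrow> bool" where
  "edge_adj R P C = (\<exists>e\<in>P. \<exists>a\<in>VGam R (src R e). (src R e, a) \<in> C \<and>
       factor R (src R e) a \<subseteq> iota R e ` carrier (Ge R e))"

definition Psi_adj :: "('v, 'e, 'a, 'g) ragg \<Rightarrow> ('v \<times> 'a) set + 'e set \<Rightarrow> ('v \<times> 'a) set + 'e set \<Rightarrow> bool" where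
  "Psi_adj R x y = (x \<in> Psi_V R \<and> y \<in> Psi_V R \<and>
     (case (x, y) of
        (Inl C, Inl D) \<Rightarrow> C \<noteq> D \<and> (\<exists>u a b. (u, a) \<in> C \<and> (u, b) \<in> D \<and> u \<in> Vs R \<and> adjG R u a b)
      | (Inl C, Inr P) \<Rightarrow> edge_adj R P C
      | (Inr P, Inl C) \<Rightarrow> edge_adj R P C
      | (Inr P, Inr Q) \<Rightarrow> False))"

definition Psi_F :: "('v, 'e, 'a, 'g) ragg \<Rightarrow> ('v \<times> 'a) set + 'e set \<Rightarrow> ('g + int) monoid" where
  "Psi_F R x = (case x of
        Inl C \<Rightarrow> transport Inl (FV R (fst (SOME p. p \<in> C)) (snd (SOME p. p \<in> C)))
      | Inr P \<Rightarrow> transport Inr (integer_mod_group 2))"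

definition Psi_GP :: "('v, 'e, 'a, 'g) ragg \<Rightarrow> ((('v \<times> 'a) set + 'e set) \<times> ('g + int)) list set monoid" where
  "Psi_GP R = graph_product (Psi_V R) (Psi_adj R) (Psi_F R)"

end

theory Submission
  imports Defs
begin

text \<open>The embedding sends an arrow e to the generator of \<open>x\<^bsub>{e,\<bar>e}\<^esub>\<close>, and an element of a vertex
  group \<open>G\<^sub>u\<close>, written as a word in its factors, to the word of \<open>\<Psi>\<G>\<close> obtained by moving each letter
  along a path to the factor of the representative of its \<open>\<sim>\<close>-class; by (iv) the result does not
  depend on the path. The relations of the fundamental groupoid hold in \<open>\<Psi>\<G>\<close>: the factors of
  \<open>\<iota>\<^sub>e(G\<^sub>e)\<close> are adjacent to \<open>x\<^bsub>{e,\<bar>e}\<^esub>\<close>, so \<open>\<iota>\<^sub>e(g) e = e \<iota>\<^sub>\<bar>e(g)\<close> becomes a commutation.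

  For injectivity, words of \<open>\<Psi>\<G>\<close> are lifted back to paths of the groupoid, reading them from a
  base vertex v: a letter of a class becomes the corresponding element of the factor of \<open>G\<^sub>v\<close> in that
  class, the generator of \<open>x\<^bsub>{e,\<bar>e}\<^esub>\<close> becomes whichever of e, \<open>\<bar>e\<close> starts at v and moves v
  along it (there is only one by (iii)), and all other letters are dropped. By (i) and (ii) the lift
  respects the relations of \<open>\<Psi>\<G>\<close>, and lifting the image of a loop gives back the loop up to the
  relations of the groupoid.\<close>

lemma qrel_refl [simp]: "qrel W st x x"
  by (simp add: qrel_def)

lemma qrel_sym: "qrel W st x y \<Longrightarrow> qrel W st y x"
  unfolding qrel_def
proof (induction rule: rtranclp_induct)
  case (step y z)
  then have "(\<lambda>x y. x \<in> W \<and> y \<in> W \<and> (st x y \<or> st y x)) z y" by blast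
  then show ?case using step.IH by (rule converse_rtranclp_into_rtranclp)
qed simp

lemma qrel_trans: "qrel W st x y \<Longrightarrow> qrel W st y z \<Longrightarrow> qrel W st x z"
  unfolding qrel_def by (rule rtranclp_trans)

lemma qrel_in_words: "qrel W st x y \<Longrightarrow> x \<in> W \<Longrightarrow> y \<in> W"
  unfolding qrel_def by (induction rule: rtranclp_induct) auto

lemma qrel_stepI: "x \<in> W \<Longrightarrow> y \<in> W \<Longrightarrow> st x y \<Longrightarrow> qrel W st x y"
  unfolding qrel_def by auto

lemma qrel_rewrite_stepI:
  "basic l r \<Longrightarrow> u @ l @ v \<in> W \<Longrightarrow> u @ r @ v \<in> W
    \<Longrightarrow> qrel W (rewrite_step basic) (u @ l @ v) (u @ r @ v)"
  by (rule qrel_stepI) (auto simp: rewrite_step_def)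

lemma qrel_map:
  assumes step: "\<And>u l r v. b l r \<Longrightarrow> u @ l @ v \<in> W \<Longrightarrow> u @ r @ v \<in> W
      \<Longrightarrow> qrel W' st' (f (u @ l @ v)) (f (u @ r @ v))"
    and "qrel W (rewrite_step b) w w'"
  shows "qrel W' st' (f w) (f w')"
  using assms(2) unfolding qrel_def[of W]
proof (induction rule: rtranclp_induct)
  case (step y z)
  from step.hyps(2) obtain u l r v where st: "b l r"
      "y = u @ l @ v \<and> z = u @ r @ v \<or> z = u @ l @ v \<and> y = u @ r @ v"
    and yz: "y \<in> W" "z \<in> W"
    unfolding rewrite_step_def by blast
  have "qrel W' st' (f y) (f z)" using st yz assms(1) qrel_sym by metis
  then show ?case using step.IH qrel_trans by metis
qed simp

lemma mem_qclass: "x \<in> W \<Longrightarrow> x \<in> qclass W st x"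
  by (simp add: qclass_def)

lemma qclass_eqI: "qrel W st x y \<Longrightarrow> qclass W st x = qclass W st y"
  unfolding qclass_def using qrel_sym qrel_trans by metis

lemma qclass_eq_iff: "x \<in> W \<Longrightarrow> y \<in> W \<Longrightarrow> qclass W st x = qclass W st y \<longleftrightarrow> qrel W st x y"
proof
  assume "y \<in> W" "qclass W st x = qclass W st y"
  then have "y \<in> qclass W st x" by (simp add: qclass_def)
  then show "qrel W st x y" by (simp add: qclass_def)
qed (rule qclass_eqI)

lemma qclass_mem_eq: "y \<in> qclass W st x \<Longrightarrow> qclass W st y = qclass W st x \<and> y \<in> W \<and> qrel W st x y"
  unfolding qclass_def using qrel_sym qrel_trans by blast

lemma qclass_some_elem:
  "x \<in> W \<Longrightarrow> some_elem (qclass W st x) \<in> W \<and> qclass W st (some_elem (qclass W st x)) = qclass W st x"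
  using some_elem_nonempty[of "qclass W st x"] mem_qclass[of x W st] qclass_mem_eq by blast

definition app_closed :: "'w list set \<Rightarrow> bool" where
  "app_closed W = (\<forall>x y. x \<in> W \<longrightarrow> y \<in> W \<longrightarrow> x @ y \<in> W)"

lemma qrel_append_right:
  "app_closed W \<Longrightarrow> y \<in> W \<Longrightarrow> qrel W (rewrite_step b) x x'
    \<Longrightarrow> qrel W (rewrite_step b) (x @ y) (x' @ y)"
proof (erule qrel_map[where f = "\<lambda>z. z @ y", rotated])
  fix u l r v assume "app_closed W" "y \<in> W" "b l r" "u @ l @ v \<in> W" "u @ r @ v \<in> W"
  then have "(u @ l @ v) @ y \<in> W" "(u @ r @ v) @ y \<in> W" unfolding app_closed_def by blast+
  then show "qrel W (rewrite_step b) ((u @ l @ v) @ y) ((u @ r @ v) @ y)"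
    using qrel_rewrite_stepI[of b l r u "v @ y" W] \<open>b l r\<close> by simp
qed

lemma qrel_append_left:
  "app_closed W \<Longrightarrow> y \<in> W \<Longrightarrow> qrel W (rewrite_step b) x x'
    \<Longrightarrow> qrel W (rewrite_step b) (y @ x) (y @ x')"
proof (erule qrel_map[where f = "\<lambda>z. y @ z", rotated])
  fix u l r v assume "app_closed W" "y \<in> W" "b l r" "u @ l @ v \<in> W" "u @ r @ v \<in> W"
  then show "qrel W (rewrite_step b) (y @ u @ l @ v) (y @ u @ r @ v)"
    using qrel_rewrite_stepI[of b l r "y @ u" v W] by (simp add: app_closed_def)
qed

lemma qrel_append:
  "app_closed W \<Longrightarrow> qrel W (rewrite_step b) x x' \<Longrightarrow> qrel W (rewrite_step b) y y'
    \<Longrightarrow> x \<in> W \<Longrightarrow> y' \<in> W \<Longrightarrow> qrel W (rewrite_step b) (x @ y) (x' @ y')"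
  by (meson qrel_append_left qrel_append_right qrel_trans)

lemma quot_carrier: "carrier (quot_monoid W st) = qclass W st ` W"
  by (simp add: quot_monoid_def)

lemma quot_one: "\<one>\<^bsub>quot_monoid W st\<^esub> = qclass W st []"
  by (simp add: quot_monoid_def)

lemma quot_mult:
  assumes W: "app_closed W" and x: "x \<in> W" and y: "y \<in> W"
  shows "qclass W (rewrite_step b) x \<otimes>\<^bsub>quot_monoid W (rewrite_step b)\<^esub> qclass W (rewrite_step b) y
    = qclass W (rewrite_step b) (x @ y)"
proof -
  let ?q = "qclass W (rewrite_step b)" and ?r = "qrel W (rewrite_step b)"
  have "w \<in> ?q (x @ y)" if "w \<in> W" "x' \<in> ?q x" "y' \<in> ?q y" "?r (x' @ y') w" for w x' y'
  proof -
    have "?r x x'" "?r y y'" "y' \<in> W" using that by (auto simp: qclass_def)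
    then have "?r (x @ y) (x' @ y')" using qrel_append W x by metis
    then show ?thesis using that unfolding qclass_def using qrel_trans by blast
  qed
  moreover have "w \<in> W \<and> (\<exists>x'\<in>?q x. \<exists>y'\<in>?q y. ?r (x' @ y') w)" if "w \<in> ?q (x @ y)" for w
    using that x y mem_qclass unfolding qclass_def by blast
  ultimately show ?thesis unfolding quot_monoid_def by auto
qed

section \<open>Graph products\<close>

definition gp_class :: "'i set \<Rightarrow> ('i \<Rightarrow> 'i \<Rightarrow> bool) \<Rightarrow> ('i \<Rightarrow> 'x monoid)
    \<Rightarrow> ('i \<times> 'x) list \<Rightarrow> ('i \<times> 'x) list set" where
  "gp_class I adj F = qclass (gp_words I F) (rewrite_step (gp_basic I adj F))"

definition gp_equiv :: "'i set \<Rightarrow> ('i \<Rightarrow> 'i \<Rightarrow> bool) \<Rightarrow> ('i \<Rightarrow> 'x monoid)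
    \<Rightarrow> ('i \<times> 'x) list \<Rightarrow> ('i \<times> 'x) list \<Rightarrow> bool" where
  "gp_equiv I adj F = qrel (gp_words I F) (rewrite_step (gp_basic I adj F))"

lemma gp_words_app_closed: "app_closed (gp_words I F)"
  by (auto simp: app_closed_def gp_words_def)

lemma gp_words_append [simp]: "xs @ ys \<in> gp_words I F \<longleftrightarrow> xs \<in> gp_words I F \<and> ys \<in> gp_words I F"
  by (auto simp: gp_words_def)

lemma gp_words_Cons [simp]:
  "p # ys \<in> gp_words I F \<longleftrightarrow> fst p \<in> I \<and> snd p \<in> carrier (F (fst p)) \<and> ys \<in> gp_words I F"
  by (auto simp: gp_words_def)

lemma gp_words_Nil [simp]: "[] \<in> gp_words I F"
  by (auto simp: gp_words_def)

lemma gp_words_cong: "(\<And>a. a \<in> I \<Longrightarrow> F a = F' a) \<Longrightarrow> gp_words I F = gp_words I F'"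
  by (auto simp: gp_words_def)

lemma gp_basic_cong: "(\<And>a. a \<in> I \<Longrightarrow> F a = F' a) \<Longrightarrow> gp_basic I adj F = gp_basic I adj F'"
  by (auto simp: gp_basic_def fun_eq_iff)

lemma graph_product_cong:
  "(\<And>a. a \<in> I \<Longrightarrow> F a = F' a) \<Longrightarrow> graph_product I adj F = graph_product I adj F'"
  by (simp add: graph_product_def gp_words_cong[of I F F'] gp_basic_cong[of I F F'])

lemma gp_class_cong: "(\<And>a. a \<in> I \<Longrightarrow> F a = F' a) \<Longrightarrow> gp_class I adj F = gp_class I adj F'"
  by (simp add: gp_class_def gp_words_cong[of I F F'] gp_basic_cong[of I F F'])

lemma gp_class_carrier: "carrier (graph_product I adj F) = gp_class I adj F ` gp_words I F"
  by (simp add: graph_product_def gp_class_def quot_carrier)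

lemma gp_class_one: "\<one>\<^bsub>graph_product I adj F\<^esub> = gp_class I adj F []"
  by (simp add: graph_product_def gp_class_def quot_one)

lemma gp_class_mult:
  "x \<in> gp_words I F \<Longrightarrow> y \<in> gp_words I F \<Longrightarrow>
    gp_class I adj F x \<otimes>\<^bsub>graph_product I adj F\<^esub> gp_class I adj F y = gp_class I adj F (x @ y)"
  unfolding graph_product_def gp_class_def by (rule quot_mult[OF gp_words_app_closed])

lemma gp_class_eq_iff:
  "x \<in> gp_words I F \<Longrightarrow> y \<in> gp_words I F \<Longrightarrow>
    gp_class I adj F x = gp_class I adj F y \<longleftrightarrow> gp_equiv I adj F x y"
  by (simp add: gp_class_def gp_equiv_def qclass_eq_iff)

lemma gp_class_eqI: "gp_equiv I adj F x y \<Longrightarrow> gp_class I adj F x = gp_class I adj F y"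
  by (simp add: gp_class_def gp_equiv_def qclass_eqI)

lemma gp_factor_gp_class: "gp_factor I adj F a = (\<lambda>x. gp_class I adj F [(a, x)]) ` carrier (F a)"
  by (simp add: gp_factor_def gp_class_def)

lemma gp_factor_cong:
  "(\<And>a. a \<in> I \<Longrightarrow> F a = F' a) \<Longrightarrow> b \<in> I \<Longrightarrow> gp_factor I adj F b = gp_factor I adj F' b"
  by (simp add: gp_factor_gp_class gp_class_cong[of I F F'])

lemma gp_equiv_refl [simp]: "gp_equiv I adj F x x"
  unfolding gp_equiv_def by simp

lemma gp_equiv_sym: "gp_equiv I adj F x y \<Longrightarrow> gp_equiv I adj F y x"
  unfolding gp_equiv_def by (rule qrel_sym)

lemma gp_equiv_trans: "gp_equiv I adj F x y \<Longrightarrow> gp_equiv I adj F y z \<Longrightarrow> gp_equiv I adj F x z"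
  unfolding gp_equiv_def by (rule qrel_trans)

lemma gp_equiv_words: "gp_equiv I adj F x y \<Longrightarrow> x \<in> gp_words I F \<Longrightarrow> y \<in> gp_words I F"
  unfolding gp_equiv_def by (rule qrel_in_words)

lemma gp_equiv_rewrite:
  "gp_basic I adj F l r \<Longrightarrow> u @ l @ v \<in> gp_words I F \<Longrightarrow> u @ r @ v \<in> gp_words I F
    \<Longrightarrow> gp_equiv I adj F (u @ l @ v) (u @ r @ v)"
  unfolding gp_equiv_def by (rule qrel_rewrite_stepI)

lemma gp_equiv_basic:
  "gp_basic I adj F l r \<Longrightarrow> l \<in> gp_words I F \<Longrightarrow> r \<in> gp_words I F \<Longrightarrow> gp_equiv I adj F l r"
  using gp_equiv_rewrite[of I adj F l r "[]" "[]"] by simp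

lemma gp_equiv_append:
  "gp_equiv I adj F x x' \<Longrightarrow> gp_equiv I adj F y y' \<Longrightarrow> x \<in> gp_words I F \<Longrightarrow> y' \<in> gp_words I F
    \<Longrightarrow> gp_equiv I adj F (x @ y) (x' @ y')"
  unfolding gp_equiv_def by (rule qrel_append[OF gp_words_app_closed])

lemma gp_equiv_context:
  "gp_equiv I adj F l r \<Longrightarrow> u \<in> gp_words I F \<Longrightarrow> v \<in> gp_words I F \<Longrightarrow> l \<in> gp_words I F
    \<Longrightarrow> gp_equiv I adj F (u @ l @ v) (u @ r @ v)"
  using gp_equiv_append[OF gp_equiv_refl gp_equiv_append[OF _ gp_equiv_refl]] gp_equiv_words
  by (metis gp_words_append)

lemma gp_equiv_mult:
  "a \<in> I \<Longrightarrow> x \<in> carrier (F a) \<Longrightarrow> y \<in> carrier (F a) \<Longrightarrow> x \<otimes>\<^bsub>F a\<^esub> y \<in> carrier (F a)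
    \<Longrightarrow> gp_equiv I adj F [(a, x), (a, y)] [(a, x \<otimes>\<^bsub>F a\<^esub> y)]"
  by (rule gp_equiv_basic) (auto simp: gp_basic_def)

lemma gp_equiv_one: "a \<in> I \<Longrightarrow> \<one>\<^bsub>F a\<^esub> \<in> carrier (F a) \<Longrightarrow> gp_equiv I adj F [(a, \<one>\<^bsub>F a\<^esub>)] []"
  by (rule gp_equiv_basic) (auto simp: gp_basic_def)

lemma gp_equiv_comm:
  "adj a b \<Longrightarrow> a \<in> I \<Longrightarrow> b \<in> I \<Longrightarrow> x \<in> carrier (F a) \<Longrightarrow> y \<in> carrier (F b)
    \<Longrightarrow> gp_equiv I adj F [(a, x), (b, y)] [(b, y), (a, x)]"
  by (rule gp_equiv_basic) (auto simp: gp_basic_def)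

lemma gp_class_letter_mult:
  "group (F a) \<Longrightarrow> a \<in> I \<Longrightarrow> x \<in> carrier (F a) \<Longrightarrow> y \<in> carrier (F a) \<Longrightarrow>
    gp_class I adj F [(a, x)] \<otimes>\<^bsub>graph_product I adj F\<^esub> gp_class I adj F [(a, y)]
      = gp_class I adj F [(a, x \<otimes>\<^bsub>F a\<^esub> y)]"
  by (simp add: gp_class_mult gp_class_eqI gp_equiv_mult group.is_monoid monoid.m_closed)

lemma gp_class_letter_one: "group (F a) \<Longrightarrow> a \<in> I \<Longrightarrow> gp_class I adj F [(a, \<one>\<^bsub>F a\<^esub>)] = gp_class I adj F []"
  by (simp add: gp_class_eqI gp_equiv_one group.is_monoid monoid.one_closed)

lemma gp_class_letter_comm:
  "adj a b \<Longrightarrow> a \<in> I \<Longrightarrow> b \<in> I \<Longrightarrow> x \<in> carrier (F a) \<Longrightarrow> y \<in> carrier (F b) \<Longrightarrow>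
    gp_class I adj F [(a, x)] \<otimes>\<^bsub>graph_product I adj F\<^esub> gp_class I adj F [(b, y)] =
    gp_class I adj F [(b, y)] \<otimes>\<^bsub>graph_product I adj F\<^esub> gp_class I adj F [(a, x)]"
  by (simp add: gp_class_mult gp_class_eqI gp_equiv_comm)

definition inv_word :: "('i \<Rightarrow> 'x monoid) \<Rightarrow> ('i \<times> 'x) list \<Rightarrow> ('i \<times> 'x) list" where
  "inv_word F w = rev (map (\<lambda>p. (fst p, inv\<^bsub>F (fst p)\<^esub> (snd p))) w)"

lemma inv_word_gp_words:
  "(\<forall>a\<in>I. group (F a)) \<Longrightarrow> w \<in> gp_words I F \<Longrightarrow> inv_word F w \<in> gp_words I F"
  by (auto simp: inv_word_def gp_words_def intro: group.inv_closed)

lemma inv_word_cancel: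
  "(\<forall>a\<in>I. group (F a)) \<Longrightarrow> w \<in> gp_words I F \<Longrightarrow> gp_equiv I adj F (inv_word F w @ w) []"
proof (induction w)
  case (Cons p w)
  obtain a x where p: "p = (a, x)" by force
  have a: "a \<in> I" and x: "x \<in> carrier (F a)" and w: "w \<in> gp_words I F" using Cons p by auto
  have g: "group (F a)" using Cons a by auto
  have iw: "inv_word F w \<in> gp_words I F" using inv_word_gp_words Cons w by blast
  have ix: "inv\<^bsub>F a\<^esub> x \<in> carrier (F a)" and one: "\<one>\<^bsub>F a\<^esub> \<in> carrier (F a)"
    using g x by (simp_all add: group.inv_closed group.is_monoid monoid.one_closed)
  have "gp_equiv I adj F [(a, inv\<^bsub>F a\<^esub> x), (a, x)] [(a, \<one>\<^bsub>F a\<^esub>)]"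
    using gp_equiv_mult[where F = F and a = a and x = "inv\<^bsub>F a\<^esub> x" and y = x and adj = adj] a ix x one g
    by (simp add: group.l_inv)
  then have "gp_equiv I adj F [(a, inv\<^bsub>F a\<^esub> x), (a, x)] []"
    using gp_equiv_trans gp_equiv_one[where F = F and a = a and adj = adj] a one by blast
  then have "gp_equiv I adj F (inv_word F w @ [(a, inv\<^bsub>F a\<^esub> x), (a, x)] @ w) (inv_word F w @ [] @ w)"
    using iw w a x ix by (intro gp_equiv_context) auto
  then show ?case using gp_equiv_trans Cons.IH[OF Cons.prems(1) w] by (simp add: inv_word_def p)
qed (simp add: inv_word_def)

lemma group_graph_product: "(\<forall>a\<in>I. group (F a)) \<Longrightarrow> group (graph_product I adj F)"
proof (rule groupI)
  fix x assume G: "\<forall>a\<in>I. group (F a)" and "x \<in> carrier (graph_product I adj F)"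
  then obtain w where w: "w \<in> gp_words I F" "x = gp_class I adj F w" by (auto simp: gp_class_carrier)
  then have "gp_class I adj F (inv_word F w) \<otimes>\<^bsub>graph_product I adj F\<^esub> x = \<one>\<^bsub>graph_product I adj F\<^esub>"
    using inv_word_gp_words[OF G] inv_word_cancel[OF G]
    by (simp add: gp_class_mult gp_class_one gp_class_eqI)
  then show "\<exists>y\<in>carrier (graph_product I adj F). y \<otimes>\<^bsub>graph_product I adj F\<^esub> x = \<one>\<^bsub>graph_product I adj F\<^esub>"
    using inv_word_gp_words[OF G w(1)] by (auto simp: gp_class_carrier)
qed (auto simp: gp_class_carrier gp_class_one gp_class_mult gp_class_mult[OF gp_words_Nil])

text \<open>The retraction onto the factor indexed by a, on words; it separates letters.\<close>

definition gp_proj :: "('i \<Rightarrow> 'x monoid) \<Rightarrow> 'i \<Rightarrow> ('i \<times> 'x) list \<Rightarrow> 'x" where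
  "gp_proj F a w = foldr (\<lambda>p acc. if fst p = a then snd p \<otimes>\<^bsub>F a\<^esub> acc else acc) w \<one>\<^bsub>F a\<^esub>"

lemma gp_proj_Nil [simp]: "gp_proj F a [] = \<one>\<^bsub>F a\<^esub>"
  by (simp add: gp_proj_def)

lemma gp_proj_Cons [simp]:
  "gp_proj F a (p # w) = (if fst p = a then snd p \<otimes>\<^bsub>F a\<^esub> gp_proj F a w else gp_proj F a w)"
  by (simp add: gp_proj_def)

lemma gp_proj_other: "\<forall>p\<in>set w. fst p \<noteq> a \<Longrightarrow> gp_proj F a w = \<one>\<^bsub>F a\<^esub>"
  by (induction w) auto

lemma gp_proj_closed: "group (F a) \<Longrightarrow> w \<in> gp_words I F \<Longrightarrow> gp_proj F a w \<in> carrier (F a)"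
  by (induction w) (auto simp: group.is_monoid monoid.m_closed monoid.one_closed)

lemma gp_proj_append:
  "group (F a) \<Longrightarrow> u \<in> gp_words I F \<Longrightarrow> v \<in> gp_words I F \<Longrightarrow>
    gp_proj F a (u @ v) = gp_proj F a u \<otimes>\<^bsub>F a\<^esub> gp_proj F a v"
proof (induction u)
  case Nil
  then show ?case using gp_proj_closed[of F a v I] by (simp add: group.is_monoid monoid.l_one)
next
  case (Cons p u)
  then show ?case using gp_proj_closed[of F a u I] gp_proj_closed[of F a v I]
    by (auto simp: monoid.m_assoc group.is_monoid)
qed

lemma gp_proj_basic:
  "group (F a) \<Longrightarrow> simplicial I adj \<Longrightarrow> gp_basic I adj F l r \<Longrightarrow> gp_proj F a l = gp_proj F a r"
  unfolding gp_basic_def simplicial_def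
  by (auto simp: group.is_monoid monoid.m_closed monoid.one_closed monoid.r_one monoid.l_one) blast+

lemma gp_proj_equiv:
  assumes g: "group (F a)" and s: "simplicial I adj" and r: "gp_equiv I adj F w w'"
  shows "gp_proj F a w = gp_proj F a w'"
  using r unfolding gp_equiv_def qrel_def
proof (induction rule: rtranclp_induct)
  case (step y z)
  from step.hyps(2) obtain u l r v where st: "gp_basic I adj F l r"
      "y = u @ l @ v \<and> z = u @ r @ v \<or> z = u @ l @ v \<and> y = u @ r @ v"
    and yz: "y \<in> gp_words I F" "z \<in> gp_words I F"
    unfolding rewrite_step_def by blast
  then have "gp_proj F a y = gp_proj F a z"
    using gp_proj_basic[OF g s st(1)] by (auto simp: gp_proj_append[of F a, OF g])
  then show ?case using step.IH by simp
qed simp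

lemma gp_class_letter_inj:
  assumes A: "group (F a)" "simplicial I adj" "a \<in> I" "x \<in> carrier (F a)" "y \<in> carrier (F a)"
    "gp_class I adj F [(a, x)] = gp_class I adj F [(a, y)]"
  shows "x = y"
proof -
  from assms have "gp_equiv I adj F [(a, x)] [(a, y)]" by (simp add: gp_class_eq_iff)
  then have "gp_proj F a [(a, x)] = gp_proj F a [(a, y)]" using gp_proj_equiv A by metis
  then show ?thesis using A by (simp add: group.is_monoid monoid.r_one)
qed

lemma gp_factor_neq:
  assumes "simplicial I adj" "a \<in> I" "b \<in> I" "a \<noteq> b" "group (F a)" "carrier (F a) \<noteq> {\<one>\<^bsub>F a\<^esub>}"
  shows "gp_factor I adj F a \<noteq> gp_factor I adj F b"
proof
  assume E: "gp_factor I adj F a = gp_factor I adj F b"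
  have "\<one>\<^bsub>F a\<^esub> \<in> carrier (F a)" using assms by (simp add: group.is_monoid monoid.one_closed)
  then obtain x where x: "x \<in> carrier (F a)" "x \<noteq> \<one>\<^bsub>F a\<^esub>" using assms by blast
  then have "gp_class I adj F [(a, x)] \<in> gp_factor I adj F b"
    using E by (auto simp: gp_factor_gp_class)
  then obtain y where "y \<in> carrier (F b)" "gp_class I adj F [(a, x)] = gp_class I adj F [(b, y)]"
    by (auto simp: gp_factor_gp_class)
  then have "gp_equiv I adj F [(a, x)] [(b, y)]" using assms x by (simp add: gp_class_eq_iff)
  then have "gp_proj F a [(a, x)] = gp_proj F a [(b, y)]" using gp_proj_equiv assms by metis
  then show False using assms x by (simp add: group.is_monoid monoid.r_one)
qed

lemma gp_factor_nonempty: "group (F a) \<Longrightarrow> gp_factor I adj F a \<noteq> {}"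
  using group.is_monoid monoid.one_closed by (fastforce simp: gp_factor_gp_class)

lemma gp_factor_subset: "a \<in> I \<Longrightarrow> gp_factor I adj F a \<subseteq> carrier (graph_product I adj F)"
  by (auto simp: gp_factor_gp_class gp_class_carrier)

definition Gv_class :: "('v, 'e, 'a, 'g) ragg \<Rightarrow> 'v \<Rightarrow> ('a \<times> 'g) list \<Rightarrow> ('a \<times> 'g) list set" where
  "Gv_class R u = gp_class (VGam R u) (adjG R u) (FV R u)"

definition Ge_class :: "('v, 'e, 'a, 'g) ragg \<Rightarrow> 'e \<Rightarrow> ('a \<times> 'g) list \<Rightarrow> ('a \<times> 'g) list set" where
  "Ge_class R e = gp_class (VEdg R e) (adjE R e) (FE R e)"

definition iota_image :: "('v, 'e, 'a, 'g) ragg \<Rightarrow> 'e \<Rightarrow> ('a \<times> 'g) list set set" where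
  "iota_image R e = iota R e ` carrier (Ge R e)"

definition rev_path :: "('v, 'e, 'a, 'g) ragg \<Rightarrow> 'e list \<Rightarrow> 'e list" where
  "rev_path R c = rev (map (bar R) c)"

lemma factor_Gv_class: "factor R u a = (\<lambda>x. Gv_class R u [(a, x)]) ` carrier (FV R u a)"
  by (simp add: factor_def Gv_class_def gp_factor_gp_class)

lemma Gv_carrier: "carrier (Gv R u) = Gv_class R u ` gp_words (VGam R u) (FV R u)"
  by (simp add: Gv_def Gv_class_def gp_class_carrier)

lemma Ge_carrier: "carrier (Ge R e) = Ge_class R e ` gp_words (VEdg R e) (FE R e)"
  by (simp add: Ge_def Ge_class_def gp_class_carrier)

lemma efactor_Ge_class: "efactor R e b = (\<lambda>z. Ge_class R e [(b, z)]) ` carrier (FE R e b)"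
  by (simp add: efactor_def Ge_class_def gp_factor_gp_class)

lemma Gv_class_mult:
  "x \<in> gp_words (VGam R u) (FV R u) \<Longrightarrow> y \<in> gp_words (VGam R u) (FV R u) \<Longrightarrow>
    Gv_class R u x \<otimes>\<^bsub>Gv R u\<^esub> Gv_class R u y = Gv_class R u (x @ y)"
  unfolding Gv_class_def Gv_def by (rule gp_class_mult)

lemma Gv_class_eq_iff:
  "x \<in> gp_words (VGam R u) (FV R u) \<Longrightarrow> y \<in> gp_words (VGam R u) (FV R u) \<Longrightarrow>
    Gv_class R u x = Gv_class R u y \<longleftrightarrow> gp_equiv (VGam R u) (adjG R u) (FV R u) x y"
  unfolding Gv_class_def by (rule gp_class_eq_iff)

lemma Gv_class_Nil: "Gv_class R u [] = \<one>\<^bsub>Gv R u\<^esub>"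
  by (simp add: Gv_class_def Gv_def gp_class_one)

lemma phiset_path_Nil [simp]: "phiset_path R [] A = A"
  by (simp add: phiset_path_def)

lemma phiset_path_Cons [simp]: "phiset_path R (e # c) A = phiset_path R c (phiset R e A)"
  by (simp add: phiset_path_def)

lemma phiset_path_append: "phiset_path R (c1 @ c2) A = phiset_path R c2 (phiset_path R c1 A)"
  by (simp add: phiset_path_def)

lemma phielt_path_Nil [simp]: "phielt_path R [] g = g"
  by (simp add: phielt_path_def)

lemma phielt_path_Cons [simp]: "phielt_path R (e # c) g = phielt_path R c (phielt R e g)"
  by (simp add: phielt_path_def)

lemma phielt_path_append: "phielt_path R (c1 @ c2) g = phielt_path R c2 (phielt_path R c1 g)"
  by (simp add: phielt_path_def)

lemma phiset_empty [simp]: "phiset R e {} = {}"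
  by (simp add: phiset_def)

lemma phiset_path_empty [simp]: "phiset_path R c {} = {}"
  by (induction c) auto

lemma arrow_path_append:
  "arrow_path R (c1 @ c2) u w \<longleftrightarrow> (\<exists>v. arrow_path R c1 u v \<and> arrow_path R c2 v w)"
  by (induction c1 arbitrary: u) auto

lemma arrow_path_Es: "arrow_path R c u v \<Longrightarrow> set c \<subseteq> Es R"
  by (induction c arbitrary: u) auto

locale ragg_setting =
  fixes R :: "('v, 'e, 'a, 'g) ragg"
  assumes ragg: "is_ragg R"
begin

lemma bar_Es [simp]: "e \<in> Es R \<Longrightarrow> bar R e \<in> Es R"
  using ragg by (simp add: is_ragg_def)

lemma bar_bar [simp]: "e \<in> Es R \<Longrightarrow> bar R (bar R e) = e"
  using ragg by (simp add: is_ragg_def)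

lemma src_bar [simp]: "e \<in> Es R \<Longrightarrow> src R (bar R e) = tgt R e"
  using ragg by (simp add: is_ragg_def)

lemma tgt_bar [simp]: "e \<in> Es R \<Longrightarrow> tgt R (bar R e) = src R e"
  by (metis bar_Es bar_bar src_bar)

lemma src_Vs [simp]: "e \<in> Es R \<Longrightarrow> src R e \<in> Vs R"
  using ragg by (simp add: is_ragg_def)

lemma tgt_Vs [simp]: "e \<in> Es R \<Longrightarrow> tgt R e \<in> Vs R"
  using ragg by (simp add: is_ragg_def)

lemma arrow_path_Vs: "arrow_path R c u v \<Longrightarrow> u \<in> Vs R \<Longrightarrow> v \<in> Vs R"
  by (induction c arbitrary: u) auto

lemma simplicial_VGam: "u \<in> Vs R \<Longrightarrow> simplicial (VGam R u) (adjG R u)"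
  using ragg by (simp add: is_ragg_def)

lemma group_FV: "u \<in> Vs R \<Longrightarrow> a \<in> VGam R u \<Longrightarrow> group (FV R u a)"
  using ragg by (simp add: is_ragg_def)

lemma FV_nontrivial: "u \<in> Vs R \<Longrightarrow> a \<in> VGam R u \<Longrightarrow> carrier (FV R u a) \<noteq> {\<one>\<^bsub>FV R u a\<^esub>}"
  using ragg by (simp add: is_ragg_def)

lemma group_FE: "e \<in> Es R \<Longrightarrow> b \<in> VEdg R e \<Longrightarrow> group (FE R e b)"
  using ragg by (simp add: is_ragg_def)

lemma VEdg_bar: "e \<in> Es R \<Longrightarrow> VEdg R (bar R e) = VEdg R e"
  using ragg by (simp add: is_ragg_def)

lemma adjE_bar: "e \<in> Es R \<Longrightarrow> adjE R (bar R e) = adjE R e"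
  using ragg by (simp add: is_ragg_def)

lemma FE_bar: "e \<in> Es R \<Longrightarrow> b \<in> VEdg R e \<Longrightarrow> FE R (bar R e) b = FE R e b"
  using ragg by (simp add: is_ragg_def)

lemma graphical_embedding_iota: "e \<in> Es R \<Longrightarrow> graphical_embedding R e"
  using ragg by (simp add: is_ragg_def)

lemma Ge_bar: "e \<in> Es R \<Longrightarrow> Ge R (bar R e) = Ge R e"
  unfolding Ge_def using graph_product_cong[of "VEdg R e" "FE R (bar R e)" "FE R e"]
  by (simp add: FE_bar VEdg_bar adjE_bar)

lemma Ge_class_bar: "e \<in> Es R \<Longrightarrow> Ge_class R (bar R e) = Ge_class R e"
  unfolding Ge_class_def using gp_class_cong[of "VEdg R e" "FE R (bar R e)" "FE R e"]
  by (simp add: FE_bar VEdg_bar adjE_bar)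

lemma Ge_words_bar:
  "e \<in> Es R \<Longrightarrow> gp_words (VEdg R (bar R e)) (FE R (bar R e)) = gp_words (VEdg R e) (FE R e)"
  using gp_words_cong[of "VEdg R e" "FE R (bar R e)" "FE R e"] by (simp add: FE_bar VEdg_bar)

lemma efactor_bar: "e \<in> Es R \<Longrightarrow> b \<in> VEdg R e \<Longrightarrow> efactor R (bar R e) b = efactor R e b"
  unfolding efactor_def using gp_factor_cong[of "VEdg R e" "FE R (bar R e)" "FE R e" b]
  by (simp add: FE_bar VEdg_bar adjE_bar)

lemma group_Gv: "u \<in> Vs R \<Longrightarrow> group (Gv R u)"
  unfolding Gv_def by (rule group_graph_product) (simp add: group_FV)

lemma group_Ge: "e \<in> Es R \<Longrightarrow> group (Ge R e)"
  unfolding Ge_def by (rule group_graph_product) (simp add: group_FE)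

lemma Gv_mult_closed:
  "u \<in> Vs R \<Longrightarrow> x \<in> carrier (Gv R u) \<Longrightarrow> y \<in> carrier (Gv R u) \<Longrightarrow> x \<otimes>\<^bsub>Gv R u\<^esub> y \<in> carrier (Gv R u)"
  using group_Gv by (simp add: group.is_monoid monoid.m_closed)

lemma Gv_one_closed: "u \<in> Vs R \<Longrightarrow> \<one>\<^bsub>Gv R u\<^esub> \<in> carrier (Gv R u)"
  using group_Gv by (simp add: group.is_monoid monoid.one_closed)

lemma iota_hom: "e \<in> Es R \<Longrightarrow> iota R e \<in> hom (Ge R e) (Gv R (src R e))"
  using graphical_embedding_iota by (simp add: graphical_embedding_def)

lemma iota_inj: "e \<in> Es R \<Longrightarrow> inj_on (iota R e) (carrier (Ge R e))"
  using graphical_embedding_iota by (simp add: graphical_embedding_def)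

lemma iota_bar_hom: "e \<in> Es R \<Longrightarrow> iota R (bar R e) \<in> hom (Ge R e) (Gv R (tgt R e))"
  using iota_hom[of "bar R e"] by (simp add: Ge_bar)

lemma iota_closed: "e \<in> Es R \<Longrightarrow> g \<in> carrier (Ge R e) \<Longrightarrow> iota R e g \<in> carrier (Gv R (src R e))"
  using iota_hom by (auto simp: hom_def)

lemma iota_bar_closed:
  "e \<in> Es R \<Longrightarrow> g \<in> carrier (Ge R e) \<Longrightarrow> iota R (bar R e) g \<in> carrier (Gv R (tgt R e))"
  using iota_bar_hom by (auto simp: hom_def)

lemma iota_mult:
  "e \<in> Es R \<Longrightarrow> g \<in> carrier (Ge R e) \<Longrightarrow> h \<in> carrier (Ge R e) \<Longrightarrow>
    iota R e (g \<otimes>\<^bsub>Ge R e\<^esub> h) = iota R e g \<otimes>\<^bsub>Gv R (src R e)\<^esub> iota R e h"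
  using iota_hom by (auto simp: hom_def)

lemma iota_bar_mult:
  "e \<in> Es R \<Longrightarrow> g \<in> carrier (Ge R e) \<Longrightarrow> h \<in> carrier (Ge R e) \<Longrightarrow>
    iota R (bar R e) (g \<otimes>\<^bsub>Ge R e\<^esub> h) = iota R (bar R e) g \<otimes>\<^bsub>Gv R (tgt R e)\<^esub> iota R (bar R e) h"
  using iota_bar_hom by (auto simp: hom_def)

lemma factor_subset: "u \<in> Vs R \<Longrightarrow> a \<in> VGam R u \<Longrightarrow> factor R u a \<subseteq> carrier (Gv R u)"
  unfolding factor_def Gv_def by (rule gp_factor_subset)

lemma factor_nonempty: "u \<in> Vs R \<Longrightarrow> a \<in> VGam R u \<Longrightarrow> factor R u a \<noteq> {}"
  unfolding factor_def by (rule gp_factor_nonempty) (simp add: group_FV)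

lemma factor_inj: "u \<in> Vs R \<Longrightarrow> a \<in> VGam R u \<Longrightarrow> b \<in> VGam R u \<Longrightarrow> factor R u a = factor R u b \<Longrightarrow> a = b"
  unfolding factor_def using gp_factor_neq simplicial_VGam group_FV FV_nontrivial by metis

lemma Gv_class_letter_mult:
  "u \<in> Vs R \<Longrightarrow> a \<in> VGam R u \<Longrightarrow> x \<in> carrier (FV R u a) \<Longrightarrow> y \<in> carrier (FV R u a) \<Longrightarrow>
    Gv_class R u [(a, x)] \<otimes>\<^bsub>Gv R u\<^esub> Gv_class R u [(a, y)] = Gv_class R u [(a, x \<otimes>\<^bsub>FV R u a\<^esub> y)]"
  unfolding Gv_class_def Gv_def by (rule gp_class_letter_mult) (simp_all add: group_FV)

lemma Gv_class_letter_inj: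
  "u \<in> Vs R \<Longrightarrow> a \<in> VGam R u \<Longrightarrow> x \<in> carrier (FV R u a) \<Longrightarrow> y \<in> carrier (FV R u a) \<Longrightarrow>
    Gv_class R u [(a, x)] = Gv_class R u [(a, y)] \<Longrightarrow> x = y"
  unfolding Gv_class_def by (rule gp_class_letter_inj) (simp_all add: group_FV simplicial_VGam)

lemma factor_mult_closed:
  assumes "u \<in> Vs R" "a \<in> VGam R u" "g \<in> factor R u a" "h \<in> factor R u a"
  shows "g \<otimes>\<^bsub>Gv R u\<^esub> h \<in> factor R u a"
proof -
  obtain x y where xy: "x \<in> carrier (FV R u a)" "y \<in> carrier (FV R u a)"
    "g = Gv_class R u [(a, x)]" "h = Gv_class R u [(a, y)]"
    using assms(3,4) by (auto simp: factor_Gv_class)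
  then have "x \<otimes>\<^bsub>FV R u a\<^esub> y \<in> carrier (FV R u a)"
    using group_FV[OF assms(1,2)] by (simp add: group.is_monoid monoid.m_closed)
  then show ?thesis using Gv_class_letter_mult assms xy by (simp add: factor_Gv_class)
qed

end

context ragg_setting
begin

lemma phielt_iota: "e \<in> Es R \<Longrightarrow> g \<in> carrier (Ge R e) \<Longrightarrow> phielt R e (iota R e g) = iota R (bar R e) g"
  unfolding phielt_def using iota_inj by (simp add: inv_into_f_f)

lemma iota_image_subset: "e \<in> Es R \<Longrightarrow> iota_image R e \<subseteq> carrier (Gv R (src R e))"
  unfolding iota_image_def using iota_closed by blast

lemma phiset_image: 
  assumes e: "e \<in> Es R" and A: "A \<subseteq> iota_image R e"
  shows "phiset R e A = phielt R e ` A"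
proof -
  have "A = iota R e ` (iota R e -` A \<inter> carrier (Ge R e))"
    using A by (auto simp: iota_image_def)
  then have "phielt R e ` A = phielt R e ` iota R e ` (iota R e -` A \<inter> carrier (Ge R e))"
    by simp
  also have "\<dots> = iota R (bar R e) ` (iota R e -` A \<inter> carrier (Ge R e))"
    unfolding image_image by (rule image_cong) (simp_all add: phielt_iota e)
  finally show ?thesis using A by (simp add: phiset_def iota_image_def)
qed

lemma phiset_nonempty_subset: "phiset R e A \<noteq> {} \<Longrightarrow> A \<subseteq> iota_image R e"
  by (auto simp: phiset_def iota_image_def split: if_splits)

lemma phielt_bar_inverse:
  assumes e: "e \<in> Es R" and g: "g \<in> iota_image R e"
  shows "phielt R e g \<in> iota_image R (bar R e) \<and> phielt R (bar R e) (phielt R e g) = g"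
proof -
  obtain g0 where g0: "g0 \<in> carrier (Ge R e)" "g = iota R e g0"
    using g by (auto simp: iota_image_def)
  then show ?thesis
    using phielt_iota[OF e g0(1)] phielt_iota[of "bar R e" g0] e
    by (auto simp: iota_image_def Ge_bar)
qed

lemma phielt_mult:
  assumes e: "e \<in> Es R" and g: "g \<in> iota_image R e" and h: "h \<in> iota_image R e"
  shows "g \<otimes>\<^bsub>Gv R (src R e)\<^esub> h \<in> iota_image R e \<and>
    phielt R e (g \<otimes>\<^bsub>Gv R (src R e)\<^esub> h) = phielt R e g \<otimes>\<^bsub>Gv R (tgt R e)\<^esub> phielt R e h"
proof -
  obtain g0 h0 where gh: "g0 \<in> carrier (Ge R e)" "g = iota R e g0" "h0 \<in> carrier (Ge R e)" "h = iota R e h0"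
    using g h by (auto simp: iota_image_def)
  moreover have "g0 \<otimes>\<^bsub>Ge R e\<^esub> h0 \<in> carrier (Ge R e)"
    using group_Ge[OF e] gh by (simp add: group.is_monoid monoid.m_closed)
  ultimately show ?thesis
    using e by (simp add: iota_image_def phielt_iota iota_mult[symmetric] iota_bar_mult)
qed

lemma phiset_path_invertible:
  "arrow_path R c u v \<Longrightarrow> phiset_path R c A \<noteq> {} \<Longrightarrow>
   phiset_path R c A = phielt_path R c ` A \<and>
   phiset_path R (rev_path R c) (phiset_path R c A) = A \<and>
   (\<forall>g\<in>A. phielt_path R (rev_path R c) (phielt_path R c g) = g)"
proof (induction c arbitrary: u A)
  case Nil then show ?case by (simp add: rev_path_def)
next
  case (Cons e c)
  have e: "e \<in> Es R" "src R e = u" and c: "arrow_path R c (tgt R e) v" using Cons.prems by auto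
  have ne: "phiset_path R c (phiset R e A) \<noteq> {}" using Cons.prems by simp
  then have A: "A \<subseteq> iota_image R e" using phiset_nonempty_subset phiset_path_empty by metis
  let ?A' = "phiset R e A"
  have A': "?A' = phielt R e ` A" using phiset_image[OF e(1) A] .
  have IH: "phiset_path R c ?A' = phielt_path R c ` ?A' \<and> phiset_path R (rev_path R c) (phiset_path R c ?A') = ?A' \<and>
    (\<forall>g\<in>?A'. phielt_path R (rev_path R c) (phielt_path R c g) = g)" using Cons.IH[OF c ne] .
  have rp: "rev_path R (e # c) = rev_path R c @ [bar R e]" by (simp add: rev_path_def)
  have bk: "phiset R (bar R e) ?A' = A"
  proof -
    have sub: "?A' \<subseteq> iota_image R (bar R e)" using A' A phielt_bar_inverse[OF e(1)] by auto
    have "phiset R (bar R e) ?A' = phielt R (bar R e) ` ?A'"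
      using phiset_image[OF bar_Es[OF e(1)] sub] .
    also have "\<dots> = A"
    proof -
      have "\<forall>g\<in>A. phielt R (bar R e) (phielt R e g) = g"
        using A phielt_bar_inverse[OF e(1)] by blast
      then show ?thesis unfolding A' image_image by simp
    qed
    finally show ?thesis .
  qed
  show ?case
  proof (intro conjI)
    show "phiset_path R (e # c) A = phielt_path R (e # c) ` A"
      using IH A' by (simp add: image_image)
    have h: "phiset_path R (rev_path R c) (phiset_path R c ?A') = ?A'" using IH by blast
    show "phiset_path R (rev_path R (e # c)) (phiset_path R (e # c) A) = A"
      unfolding rp phiset_path_append phiset_path_Cons h using bk by simp
    show "\<forall>g\<in>A. phielt_path R (rev_path R (e # c)) (phielt_path R (e # c) g) = g"
    proof
      fix g assume g: "g \<in> A"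
      then have "phielt_path R (rev_path R c) (phielt_path R c (phielt R e g)) = phielt R e g"
        using IH A' by blast
      moreover have "phielt R (bar R e) (phielt R e g) = g"
        using g A phielt_bar_inverse[OF e(1)] by blast
      ultimately show "phielt_path R (rev_path R (e # c)) (phielt_path R (e # c) g) = g"
        by (simp add: rp phielt_path_append)
    qed
  qed
qed

lemma phielt_path_mult:
  "arrow_path R c u v \<Longrightarrow> phiset_path R c A \<noteq> {} \<Longrightarrow> A \<subseteq> carrier (Gv R u) \<Longrightarrow>
    (\<forall>g\<in>A. \<forall>h\<in>A. g \<otimes>\<^bsub>Gv R u\<^esub> h \<in> A) \<Longrightarrow> g \<in> A \<Longrightarrow> h \<in> A \<Longrightarrow>
    phielt_path R c (g \<otimes>\<^bsub>Gv R u\<^esub> h) = phielt_path R c g \<otimes>\<^bsub>Gv R v\<^esub> phielt_path R c h"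
proof (induction c arbitrary: u A g h)
  case (Cons e c)
  have e: "e \<in> Es R" "src R e = u" and c: "arrow_path R c (tgt R e) v" using Cons.prems(1) by auto
  have ne: "phiset_path R c (phiset R e A) \<noteq> {}" using Cons.prems(2) by simp
  then have A: "A \<subseteq> iota_image R e" using phiset_nonempty_subset phiset_path_empty by metis
  let ?A' = "phiset R e A"
  have A': "?A' = phielt R e ` A" using phiset_image[OF e(1) A] .
  have "?A' \<subseteq> iota_image R (bar R e)" using A' A phielt_bar_inverse[OF e(1)] by auto
  then have sub: "?A' \<subseteq> carrier (Gv R (tgt R e))" using iota_image_subset[of "bar R e"] e(1) by auto
  have mult: "phielt R e (g' \<otimes>\<^bsub>Gv R u\<^esub> h') = phielt R e g' \<otimes>\<^bsub>Gv R (tgt R e)\<^esub> phielt R e h'"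
    if "g' \<in> A" "h' \<in> A" for g' h'
  proof -
    have "g' \<in> iota_image R e" "h' \<in> iota_image R e" using that A by auto
    from phielt_mult[OF e(1) this] show ?thesis using e(2) by simp
  qed
  have closed: "\<forall>x\<in>?A'. \<forall>y\<in>?A'. x \<otimes>\<^bsub>Gv R (tgt R e)\<^esub> y \<in> ?A'"
  proof (intro ballI)
    fix x y assume "x \<in> ?A'" "y \<in> ?A'"
    then obtain g' h' where "g' \<in> A" "h' \<in> A" "x = phielt R e g'" "y = phielt R e h'"
      using A' by auto
    then have "x \<otimes>\<^bsub>Gv R (tgt R e)\<^esub> y = phielt R e (g' \<otimes>\<^bsub>Gv R u\<^esub> h')"
      and "g' \<otimes>\<^bsub>Gv R u\<^esub> h' \<in> A"
      using mult Cons.prems(4) by simp_all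
    then show "x \<otimes>\<^bsub>Gv R (tgt R e)\<^esub> y \<in> ?A'" using A' by blast
  qed
  have "phielt R e g \<in> ?A'" "phielt R e h \<in> ?A'" using A' Cons.prems(5,6) by auto
  then show ?case
    using Cons.IH[OF c ne sub closed] mult[OF Cons.prems(5,6)] by simp
qed simp

lemma arrow_path_rev: "arrow_path R c u v \<Longrightarrow> arrow_path R (rev_path R c) v u"
  by (induction c arbitrary: u) (auto simp: rev_path_def arrow_path_append)

lemma rev_path_rev_path:
  assumes "arrow_path R c u v"
  shows "rev_path R (rev_path R c) = c"
proof -
  from assms have "set c \<subseteq> Es R" by (rule arrow_path_Es)
  then show ?thesis by (induction c) (auto simp: rev_path_def)
qed

end

section \<open>The vertices of \<open>\<Psi>\<close>\<close>

definition carries :: "('v, 'e, 'a, 'g) ragg \<Rightarrow> 'v \<Rightarrow> 'a \<Rightarrow> 'e list \<Rightarrow> 'v \<Rightarrow> 'a \<Rightarrow> bool" where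
  "carries R u a c v b =
     (arrow_path R c u v \<and> b \<in> VGam R v \<and> phiset_path R c (factor R u a) = factor R v b)"

definition sim_sym :: "('v, 'e, 'a, 'g) ragg \<Rightarrow> 'v \<times> 'a \<Rightarrow> 'v \<times> 'a \<Rightarrow> bool" where
  "sim_sym R x y = (sim R x y \<or> sim R y x)"

lemma psi_class_sim_sym: "psi_class R p = {q. (sim_sym R)\<^sup>*\<^sup>* p q}"
  by (simp add: psi_class_def sim_sym_def[abs_def])

lemma psi_class_refl: "p \<in> psi_class R p"
  by (simp add: psi_class_sim_sym)

lemma sim_sym_rtranclp_sym: "(sim_sym R)\<^sup>*\<^sup>* p q \<Longrightarrow> (sim_sym R)\<^sup>*\<^sup>* q p"
proof (induction rule: rtranclp_induct)
  case (step y z)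
  then have "sim_sym R z y" by (auto simp: sim_sym_def)
  then show ?case using step.IH by (rule converse_rtranclp_into_rtranclp)
qed simp

lemma psi_class_eq: "q \<in> psi_class R p \<Longrightarrow> psi_class R q = psi_class R p"
  unfolding psi_class_sim_sym using sim_sym_rtranclp_sym rtranclp_trans
  by (metis (mono_tags, lifting) Collect_cong mem_Collect_eq)

lemma some_elem_psi_class: "some_elem (psi_class R p) \<in> psi_class R p"
  using psi_class_refl[of p R] by (intro some_elem_nonempty) blast

lemma carries_append: "carries R u a c v b \<Longrightarrow> carries R v b c' w d \<Longrightarrow> carries R u a (c @ c') w d"
  by (auto simp: carries_def arrow_path_append phiset_path_append)

lemma carries_Nil: "a \<in> VGam R u \<Longrightarrow> carries R u a [] u a"
  by (simp add: carries_def)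

lemma sim_carries: "sim R p q \<Longrightarrow> \<exists>e. carries R (fst p) (snd p) [e] (fst q) (snd q)"
  unfolding sim_def carries_def by auto

context ragg_setting
begin

lemma carries_invertible:
  assumes c: "carries R u a c v b" and u: "u \<in> Vs R" and a: "a \<in> VGam R u"
  shows "factor R v b = phielt_path R c ` factor R u a" and "carries R v b (rev_path R c) u a"
    and "\<forall>g\<in>factor R u a. phielt_path R (rev_path R c) (phielt_path R c g) = g"
proof -
  have ap: "arrow_path R c u v" and b: "b \<in> VGam R v"
    and eq: "phiset_path R c (factor R u a) = factor R v b"
    using c by (auto simp: carries_def)
  have "phiset_path R c (factor R u a) \<noteq> {}"
    using eq factor_nonempty[OF arrow_path_Vs[OF ap u] b] by simp
  note inv = phiset_path_invertible[OF ap this]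
  show "factor R v b = phielt_path R c ` factor R u a" using inv eq by simp
  show "carries R v b (rev_path R c) u a"
    using inv arrow_path_rev[OF ap] a unfolding carries_def eq by blast
  show "\<forall>g\<in>factor R u a. phielt_path R (rev_path R c) (phielt_path R c g) = g"
    using inv by blast
qed

lemma carries_mem:
  "carries R u a c v b \<Longrightarrow> u \<in> Vs R \<Longrightarrow> a \<in> VGam R u \<Longrightarrow> g \<in> factor R u a \<Longrightarrow>
    phielt_path R c g \<in> factor R v b"
  by (simp add: carries_invertible(1))

lemma carries_inj:
  "carries R u a c v b \<Longrightarrow> u \<in> Vs R \<Longrightarrow> a \<in> VGam R u \<Longrightarrow> g \<in> factor R u a \<Longrightarrow>
    g' \<in> factor R u a \<Longrightarrow> phielt_path R c g = phielt_path R c g' \<Longrightarrow> g = g'"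
  using carries_invertible(3) by metis

lemma carries_surj:
  "carries R u a c v b \<Longrightarrow> u \<in> Vs R \<Longrightarrow> a \<in> VGam R u \<Longrightarrow> h \<in> factor R v b \<Longrightarrow>
    \<exists>g\<in>factor R u a. phielt_path R c g = h"
  by (auto simp: carries_invertible(1))

lemma carries_mult:
  assumes c: "carries R u a c v b" and u: "u \<in> Vs R" and a: "a \<in> VGam R u"
    and "g \<in> factor R u a" "h \<in> factor R u a"
  shows "phielt_path R c (g \<otimes>\<^bsub>Gv R u\<^esub> h) = phielt_path R c g \<otimes>\<^bsub>Gv R v\<^esub> phielt_path R c h"
proof -
  have ap: "arrow_path R c u v" and b: "b \<in> VGam R v"
    and eq: "phiset_path R c (factor R u a) = factor R v b"
    using c by (auto simp: carries_def)
  have "phiset_path R c (factor R u a) \<noteq> {}"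
    using eq factor_nonempty[OF arrow_path_Vs[OF ap u] b] by simp
  moreover have "\<forall>g\<in>factor R u a. \<forall>h\<in>factor R u a. g \<otimes>\<^bsub>Gv R u\<^esub> h \<in> factor R u a"
    using factor_mult_closed[OF u a] by blast
  ultimately show ?thesis by (rule phielt_path_mult[OF ap _ factor_subset[OF u a] _ assms(4,5)])
qed

lemma psi_class_carried:
  assumes u: "u \<in> Vs R" and a: "a \<in> VGam R u" and q: "q \<in> psi_class R (u, a)"
  shows "fst q \<in> Vs R \<and> snd q \<in> VGam R (fst q) \<and> (\<exists>c. carries R u a c (fst q) (snd q))"
proof -
  from q have "(sim_sym R)\<^sup>*\<^sup>* (u, a) q" by (simp add: psi_class_sim_sym)
  then show ?thesis
  proof (induction rule: rtranclp_induct)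
    case base
    then show ?case using u a carries_Nil[OF a] by auto
  next
    case (step y z)
    then obtain c where y: "fst y \<in> Vs R" "snd y \<in> VGam R (fst y)" "carries R u a c (fst y) (snd y)"
      by blast
    from step.hyps(2) show ?case unfolding sim_sym_def
    proof
      assume "sim R y z"
      then obtain e where e: "carries R (fst y) (snd y) [e] (fst z) (snd z)"
        using sim_carries by blast
      then have "fst z \<in> Vs R" unfolding carries_def using tgt_Vs by fastforce
      then show ?thesis using e carries_append[OF y(3) e] by (auto simp: carries_def)
    next
      assume zy: "sim R z y"
      then obtain e where e: "carries R (fst z) (snd z) [e] (fst y) (snd y)"
        using sim_carries by blast
      have z: "fst z \<in> Vs R" "snd z \<in> VGam R (fst z)" using zy unfolding sim_def by auto
      show ?thesis using z carries_append[OF y(3) carries_invertible(2)[OF e z]] by blast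
    qed
  qed
qed

end

text \<open>Conditions (i)--(iv) are only used through the following consequences: by (iv) the
  identification of two factors along carrying paths does not depend on the path, by (i) a class
  meets each \<open>\<Gamma>\<^sub>u\<close> at most once, and by (ii) adjacency of classes can be read off at any vertex.
  Condition (iii) enters when lifting the letters \<open>x\<^bsub>{e,\<bar>e}\<^esub>\<close>.\<close>

locale ragg_conditions = ragg_setting +
  assumes condition_i: "cond_i R" and condition_ii: "cond_ii R"
    and condition_iii: "cond_iii R" and condition_iv: "cond_iv R"
begin

lemma carries_transport_unique:
  assumes u: "u \<in> Vs R" and a: "a \<in> VGam R u" and c: "carries R u a c v b"
    and c': "carries R u a c' v b" and g: "g \<in> factor R u a"
  shows "phielt_path R c g = phielt_path R c' g"
proof -
  have v: "v \<in> Vs R" "b \<in> VGam R v" using c arrow_path_Vs u by (auto simp: carries_def)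
  have r: "carries R v b (rev_path R c') u a" using carries_invertible(2)[OF c' u a] .
  have "carries R u a (c @ rev_path R c') u a" using carries_append[OF c r] .
  then have "restrict (phielt_path R (c @ rev_path R c')) (factor R u a) \<in> Phi R u (factor R u a)"
    unfolding Phi_def carries_def by blast
  then have "restrict (phielt_path R (c @ rev_path R c')) (factor R u a) = restrict id (factor R u a)"
    using condition_iv u a by (simp add: cond_iv_def)
  then have "phielt_path R (c @ rev_path R c') g = g" using g by (metis id_apply restrict_apply')
  then have "phielt_path R c' (phielt_path R (rev_path R c') (phielt_path R c g)) = phielt_path R c' g"
    by (simp add: phielt_path_append)
  moreover have "phielt_path R c g \<in> factor R v b" using carries_mem[OF c u a g] .
  moreover have "rev_path R (rev_path R c') = c'"
    using c' rev_path_rev_path by (auto simp: carries_def)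
  ultimately show ?thesis using carries_invertible(3)[OF r v] by metis
qed

lemma psi_class_same_vertex:
  assumes v: "v \<in> Vs R" and a: "a \<in> VGam R v" and q: "(v, a') \<in> psi_class R (v, a)"
  shows "factor R v a' = factor R v a"
proof -
  obtain c where c: "carries R v a c v a'" and a': "a' \<in> VGam R v"
    using psi_class_carried[OF v a q] by auto
  have "phiset_path R c (factor R v a) \<in> {{}, factor R v a}"
    using condition_i v a c unfolding cond_i_def carries_def by blast
  then show ?thesis using c factor_nonempty[OF v a'] by (auto simp: carries_def)
qed

lemma psi_class_neq:
  "u \<in> Vs R \<Longrightarrow> a \<in> VGam R u \<Longrightarrow> b \<in> VGam R u \<Longrightarrow> a \<noteq> b \<Longrightarrow> psi_class R (u, a) \<noteq> psi_class R (u, b)"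
  using psi_class_refl psi_class_same_vertex factor_inj by metis

lemma psi_class_adj:
  "u \<in> Vs R \<Longrightarrow> v \<in> Vs R \<Longrightarrow> a1 \<in> VGam R u \<Longrightarrow> a2 \<in> VGam R u \<Longrightarrow> adjG R u a1 a2 \<Longrightarrow>
    b1 \<in> VGam R v \<Longrightarrow> b2 \<in> VGam R v \<Longrightarrow> (v, b1) \<in> psi_class R (u, a1) \<Longrightarrow>
    (v, b2) \<in> psi_class R (u, a2) \<Longrightarrow> adjG R v b1 b2"
proof (rule ccontr)
  assume A: "u \<in> Vs R" "v \<in> Vs R" "a1 \<in> VGam R u" "a2 \<in> VGam R u" "adjG R u a1 a2"
    "b1 \<in> VGam R v" "b2 \<in> VGam R v" "(v, b1) \<in> psi_class R (u, a1)" "(v, b2) \<in> psi_class R (u, a2)"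
    and N: "\<not> adjG R v b1 b2"
  have ne: "a1 \<noteq> a2" using A(5) simplicial_VGam[OF A(1)] by (auto simp: simplicial_def)
  obtain \<alpha> where al: "carries R u a1 \<alpha> v b1" using psi_class_carried[OF A(1,3,8)] by auto
  obtain \<beta> where be: "carries R u a2 \<beta> v b2" using psi_class_carried[OF A(1,4,9)] by auto
  show False
  proof (cases "b1 = b2")
    case True
    then show False
      using psi_class_eq[OF A(8)] psi_class_eq[OF A(9)] psi_class_neq[OF A(1,3,4) ne] by simp
  next
    case False
    then show False using condition_ii A N ne al be unfolding cond_ii_def carries_def by blast
  qed
qed

end

text \<open>\<open>to_rep u a x\<close> is the element of the factor of the class representative to which x is
  carried along any carrying path (by (iv) all of them agree); \<open>from_rep C v y\<close> carries y back to
  the factor of \<open>G\<^sub>v\<close> lying in C, which is unique by (i).\<close>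

definition to_rep :: "('v, 'e, 'a, 'g) ragg \<Rightarrow> 'v \<Rightarrow> 'a \<Rightarrow> 'g \<Rightarrow> 'g" where
  "to_rep R u a x = (let p = some_elem (psi_class R (u, a)) in
     SOME y. y \<in> carrier (FV R (fst p) (snd p)) \<and>
       (\<exists>c. carries R u a c (fst p) (snd p) \<and>
         phielt_path R c (Gv_class R u [(a, x)]) = Gv_class R (fst p) [(snd p, y)]))"

definition from_rep :: "('v, 'e, 'a, 'g) ragg \<Rightarrow> ('v \<times> 'a) set \<Rightarrow> 'v \<Rightarrow> 'g \<Rightarrow> ('a \<times> 'g) list set" where
  "from_rep R C v y = (let p = some_elem C in
     SOME g. \<exists>a. (v, a) \<in> C \<and> a \<in> VGam R v \<and> g \<in> factor R v a \<and>
       (\<forall>c. carries R v a c (fst p) (snd p) \<longrightarrow> phielt_path R c g = Gv_class R (fst p) [(snd p, y)]))"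

context ragg_conditions
begin

lemma some_elem_psi_class_carried:
  "u \<in> Vs R \<Longrightarrow> a \<in> VGam R u \<Longrightarrow> p = some_elem (psi_class R (u, a)) \<Longrightarrow>
    fst p \<in> Vs R \<and> snd p \<in> VGam R (fst p) \<and> (\<exists>c. carries R u a c (fst p) (snd p))"
  using psi_class_carried some_elem_psi_class by metis

lemma to_rep_spec:
  assumes u: "u \<in> Vs R" and a: "a \<in> VGam R u" and x: "x \<in> carrier (FV R u a)"
    and p: "p = some_elem (psi_class R (u, a))"
  shows "to_rep R u a x \<in> carrier (FV R (fst p) (snd p)) \<and>
    (\<forall>c. carries R u a c (fst p) (snd p) \<longrightarrow>
      phielt_path R c (Gv_class R u [(a, x)]) = Gv_class R (fst p) [(snd p, to_rep R u a x)])"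
proof -
  obtain c0 where p1: "fst p \<in> Vs R" "snd p \<in> VGam R (fst p)"
    and c0: "carries R u a c0 (fst p) (snd p)"
    using some_elem_psi_class_carried[OF u a p] by blast
  have g: "Gv_class R u [(a, x)] \<in> factor R u a" using x by (simp add: factor_Gv_class)
  have "phielt_path R c0 (Gv_class R u [(a, x)]) \<in> factor R (fst p) (snd p)"
    using carries_mem[OF c0 u a g] .
  then obtain y0 where y0: "y0 \<in> carrier (FV R (fst p) (snd p))"
    "phielt_path R c0 (Gv_class R u [(a, x)]) = Gv_class R (fst p) [(snd p, y0)]"
    by (auto simp: factor_Gv_class)
  let ?P = "\<lambda>y. y \<in> carrier (FV R (fst p) (snd p)) \<and>
     (\<exists>c. carries R u a c (fst p) (snd p) \<and>
       phielt_path R c (Gv_class R u [(a, x)]) = Gv_class R (fst p) [(snd p, y)])"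
  have ex: "\<exists>y. ?P y" using y0 c0 by blast
  have r: "to_rep R u a x = (SOME y. ?P y)" unfolding to_rep_def p Let_def ..
  have P: "?P (to_rep R u a x)" unfolding r using someI_ex[OF ex] .
  then obtain c1 where c1: "carries R u a c1 (fst p) (snd p)"
    "phielt_path R c1 (Gv_class R u [(a, x)]) = Gv_class R (fst p) [(snd p, to_rep R u a x)]"
    by blast
  show ?thesis
  proof (intro conjI allI impI)
    show "to_rep R u a x \<in> carrier (FV R (fst p) (snd p))" using P by blast
    fix c assume c: "carries R u a c (fst p) (snd p)"
    show "phielt_path R c (Gv_class R u [(a, x)]) = Gv_class R (fst p) [(snd p, to_rep R u a x)]"
      using carries_transport_unique[OF u a c c1(1) g] c1(2) by simp
  qed
qed

lemma to_rep_mult: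
  assumes u: "u \<in> Vs R" and a: "a \<in> VGam R u" and x: "x \<in> carrier (FV R u a)"
    and y: "y \<in> carrier (FV R u a)"
    and p: "p = some_elem (psi_class R (u, a))"
  shows "to_rep R u a (x \<otimes>\<^bsub>FV R u a\<^esub> y) = to_rep R u a x \<otimes>\<^bsub>FV R (fst p) (snd p)\<^esub> to_rep R u a y"
proof -
  obtain c0 where p1: "fst p \<in> Vs R" "snd p \<in> VGam R (fst p)"
    and c0: "carries R u a c0 (fst p) (snd p)"
    using some_elem_psi_class_carried[OF u a p] by blast
  have xy: "x \<otimes>\<^bsub>FV R u a\<^esub> y \<in> carrier (FV R u a)"
    using group_FV[OF u a] x y by (simp add: group.is_monoid monoid.m_closed)
  note sx = to_rep_spec[OF u a x p] and sy = to_rep_spec[OF u a y p]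
    and sxy = to_rep_spec[OF u a xy p]
  have gx: "Gv_class R u [(a, x)] \<in> factor R u a" and gy: "Gv_class R u [(a, y)] \<in> factor R u a"
    using x y by (auto simp: factor_Gv_class)
  have "Gv_class R (fst p) [(snd p, to_rep R u a (x \<otimes>\<^bsub>FV R u a\<^esub> y))]
      = phielt_path R c0 (Gv_class R u [(a, x \<otimes>\<^bsub>FV R u a\<^esub> y)])"
    using sxy c0 by simp
  also have "\<dots> = phielt_path R c0 (Gv_class R u [(a, x)] \<otimes>\<^bsub>Gv R u\<^esub> Gv_class R u [(a, y)])"
    using Gv_class_letter_mult[OF u a x y] by simp
  also have "\<dots> = phielt_path R c0 (Gv_class R u [(a, x)]) \<otimes>\<^bsub>Gv R (fst p)\<^esub>
      phielt_path R c0 (Gv_class R u [(a, y)])"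
    using carries_mult[OF c0 u a gx gy] .
  also have "\<dots> = Gv_class R (fst p) [(snd p, to_rep R u a x)] \<otimes>\<^bsub>Gv R (fst p)\<^esub>
      Gv_class R (fst p) [(snd p, to_rep R u a y)]"
    using sx sy c0 by simp
  also have "\<dots> = Gv_class R (fst p) [(snd p, to_rep R u a x \<otimes>\<^bsub>FV R (fst p) (snd p)\<^esub> to_rep R u a y)]"
    using Gv_class_letter_mult p1 sx sy by simp
  finally have e: "Gv_class R (fst p) [(snd p, to_rep R u a (x \<otimes>\<^bsub>FV R u a\<^esub> y))] =
      Gv_class R (fst p) [(snd p, to_rep R u a x \<otimes>\<^bsub>FV R (fst p) (snd p)\<^esub> to_rep R u a y)]" .
  have c2: "to_rep R u a x \<otimes>\<^bsub>FV R (fst p) (snd p)\<^esub> to_rep R u a y \<in> carrier (FV R (fst p) (snd p))"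
    using group_FV[OF p1] sx sy by (simp add: group.is_monoid monoid.m_closed)
  show ?thesis using Gv_class_letter_inj[OF p1 _ c2 e] sxy by simp
qed

lemma to_rep_one:
  assumes u: "u \<in> Vs R" and a: "a \<in> VGam R u" and p: "p = some_elem (psi_class R (u, a))"
  shows "to_rep R u a \<one>\<^bsub>FV R u a\<^esub> = \<one>\<^bsub>FV R (fst p) (snd p)\<^esub>"
proof -
  have p1: "fst p \<in> Vs R" "snd p \<in> VGam R (fst p)"
    using some_elem_psi_class_carried[OF u a p] by blast+
  have o: "\<one>\<^bsub>FV R u a\<^esub> \<in> carrier (FV R u a)"
    using group_FV[OF u a] by (simp add: group.is_monoid monoid.one_closed)
  have m: "to_rep R u a \<one>\<^bsub>FV R u a\<^esub>
      = to_rep R u a \<one>\<^bsub>FV R u a\<^esub> \<otimes>\<^bsub>FV R (fst p) (snd p)\<^esub> to_rep R u a \<one>\<^bsub>FV R u a\<^esub>"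
    using to_rep_mult[OF u a o o p] group_FV[OF u a] by (simp add: group.is_monoid monoid.l_one o)
  have c: "to_rep R u a \<one>\<^bsub>FV R u a\<^esub> \<in> carrier (FV R (fst p) (snd p))"
    using to_rep_spec[OF u a o p] by blast
  show ?thesis using m c group.l_cancel_one'[OF group_FV[OF p1] c c] by simp
qed

lemma to_rep_edge:
  assumes e: "e \<in> Es R" and a: "a \<in> VGam R (src R e)" and b: "b \<in> VGam R (tgt R e)"
    and f: "phiset R e (factor R (src R e) a) = factor R (tgt R e) b"
    and x: "x \<in> carrier (FV R (src R e) a)" and y: "y \<in> carrier (FV R (tgt R e) b)"
    and el: "phielt R e (Gv_class R (src R e) [(a, x)]) = Gv_class R (tgt R e) [(b, y)]"
  shows "psi_class R (tgt R e, b) = psi_class R (src R e, a) \<and>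
    to_rep R (tgt R e) b y = to_rep R (src R e) a x"
proof -
  have s: "sim R (src R e, a) (tgt R e, b)" unfolding sim_def using e a b f by auto
  then have "(tgt R e, b) \<in> psi_class R (src R e, a)" unfolding psi_class_def by auto
  then have cl: "psi_class R (tgt R e, b) = psi_class R (src R e, a)" by (rule psi_class_eq)
  define p where "p = some_elem (psi_class R (src R e, a))"
  have pt: "p = some_elem (psi_class R (tgt R e, b))" using cl p_def by simp
  have sv: "src R e \<in> Vs R" "tgt R e \<in> Vs R" using e by auto
  obtain c where c: "carries R (tgt R e) b c (fst p) (snd p)"
    and p1: "fst p \<in> Vs R" "snd p \<in> VGam R (fst p)"
    using some_elem_psi_class_carried[OF sv(2) b pt] by blast
  have g1: "carries R (src R e) a [e] (tgt R e) b" using e b f by (simp add: carries_def)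
  have ec: "carries R (src R e) a (e # c) (fst p) (snd p)" using carries_append[OF g1 c] by simp
  have "phielt_path R (e # c) (Gv_class R (src R e) [(a, x)])
      = Gv_class R (fst p) [(snd p, to_rep R (src R e) a x)]"
    using to_rep_spec[OF sv(1) a x p_def] ec by blast
  then have "Gv_class R (fst p) [(snd p, to_rep R (src R e) a x)]
      = phielt_path R (e # c) (Gv_class R (src R e) [(a, x)])"
    by simp
  also have "\<dots> = phielt_path R c (Gv_class R (tgt R e) [(b, y)])" using el by simp
  also have "\<dots> = Gv_class R (fst p) [(snd p, to_rep R (tgt R e) b y)]"
    using to_rep_spec[OF sv(2) b y pt] c by simp
  finally have "Gv_class R (fst p) [(snd p, to_rep R (src R e) a x)]
      = Gv_class R (fst p) [(snd p, to_rep R (tgt R e) b y)]" .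
  then have "to_rep R (src R e) a x = to_rep R (tgt R e) b y"
    using Gv_class_letter_inj[OF p1] to_rep_spec[OF sv(1) a x p_def] to_rep_spec[OF sv(2) b y pt]
    by blast
  then show ?thesis using cl by simp
qed

lemma from_rep_spec:
  assumes v: "v \<in> Vs R" and a: "a \<in> VGam R v" and C: "C = psi_class R (v, a)"
    and p: "p = some_elem C"
    and y: "y \<in> carrier (FV R (fst p) (snd p))"
  shows "from_rep R C v y \<in> factor R v a \<and>
    (\<forall>c. carries R v a c (fst p) (snd p) \<longrightarrow> phielt_path R c (from_rep R C v y) = Gv_class R (fst p) [(snd p, y)])"
proof -
  obtain c0 where p1: "fst p \<in> Vs R" "snd p \<in> VGam R (fst p)"
    and c0: "carries R v a c0 (fst p) (snd p)"
    using some_elem_psi_class_carried[OF v a] C p by blast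
  have h: "Gv_class R (fst p) [(snd p, y)] \<in> factor R (fst p) (snd p)"
    using y by (simp add: factor_Gv_class)
  obtain g0 where g0: "g0 \<in> factor R v a" "phielt_path R c0 g0 = Gv_class R (fst p) [(snd p, y)]"
    using carries_surj[OF c0 v a h] by blast
  let ?P = "\<lambda>g. \<exists>a. (v, a) \<in> C \<and> a \<in> VGam R v \<and> g \<in> factor R v a \<and>
     (\<forall>c. carries R v a c (fst p) (snd p) \<longrightarrow> phielt_path R c g = Gv_class R (fst p) [(snd p, y)])"
  have "?P g0"
  proof (intro exI conjI allI impI)
    show "(v, a) \<in> C" using C psi_class_refl by metis
    show "a \<in> VGam R v" using a .
    show "g0 \<in> factor R v a" using g0 by simp
    fix c assume "carries R v a c (fst p) (snd p)"
    then show "phielt_path R c g0 = Gv_class R (fst p) [(snd p, y)]"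
      using carries_transport_unique[OF v a _ c0 g0(1)] g0(2) by simp
  qed
  then have P: "?P (from_rep R C v y)" unfolding from_rep_def Let_def p[symmetric] by (rule someI)
  then obtain a' where a': "(v, a') \<in> C" "a' \<in> VGam R v" "from_rep R C v y \<in> factor R v a'"
    "\<forall>c. carries R v a' c (fst p) (snd p) \<longrightarrow> phielt_path R c (from_rep R C v y) = Gv_class R (fst p) [(snd p, y)]"
    using p by blast
  have ff: "factor R v a' = factor R v a" using psi_class_same_vertex[OF v a] a'(1) C by simp
  have gg: "carries R v a' c w d = carries R v a c w d" for c w d by (simp add: carries_def ff)
  show ?thesis using a'(3,4) ff gg by simp
qed

lemma from_rep_to_rep:
  assumes v: "v \<in> Vs R" and a: "a \<in> VGam R v" and x: "x \<in> carrier (FV R v a)"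
  shows "from_rep R (psi_class R (v, a)) v (to_rep R v a x) = Gv_class R v [(a, x)]"
proof -
  define p where "p = some_elem (psi_class R (v, a))"
  obtain c0 where p1: "fst p \<in> Vs R" "snd p \<in> VGam R (fst p)"
    and c0: "carries R v a c0 (fst p) (snd p)"
    using some_elem_psi_class_carried[OF v a p_def] by blast
  note r = to_rep_spec[OF v a x p_def]
  note s = from_rep_spec[OF v a refl p_def conjunct1[OF r]]
  have g: "Gv_class R v [(a, x)] \<in> factor R v a" using x by (simp add: factor_Gv_class)
  show ?thesis using carries_inj[OF c0 v a conjunct1[OF s] g] s r c0 by simp
qed

lemma from_rep_mult:
  assumes v: "v \<in> Vs R" and a: "a \<in> VGam R v" and C: "C = psi_class R (v, a)"
    and p: "p = some_elem C"
    and y1: "y1 \<in> carrier (FV R (fst p) (snd p))" and y2: "y2 \<in> carrier (FV R (fst p) (snd p))"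
  shows "from_rep R C v (y1 \<otimes>\<^bsub>FV R (fst p) (snd p)\<^esub> y2) = from_rep R C v y1 \<otimes>\<^bsub>Gv R v\<^esub> from_rep R C v y2"
proof -
  obtain c0 where p1: "fst p \<in> Vs R" "snd p \<in> VGam R (fst p)"
    and c0: "carries R v a c0 (fst p) (snd p)"
    using some_elem_psi_class_carried[OF v a] C p by blast
  have y12: "y1 \<otimes>\<^bsub>FV R (fst p) (snd p)\<^esub> y2 \<in> carrier (FV R (fst p) (snd p))"
    using group_FV[OF p1] y1 y2 by (simp add: group.is_monoid monoid.m_closed)
  note s1 = from_rep_spec[OF v a C p y1] and s2 = from_rep_spec[OF v a C p y2]
    and s12 = from_rep_spec[OF v a C p y12]
  have m: "from_rep R C v y1 \<otimes>\<^bsub>Gv R v\<^esub> from_rep R C v y2 \<in> factor R v a"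
    using factor_mult_closed[OF v a] s1 s2 by blast
  have "phielt_path R c0 (from_rep R C v y1 \<otimes>\<^bsub>Gv R v\<^esub> from_rep R C v y2) =
     phielt_path R c0 (from_rep R C v y1) \<otimes>\<^bsub>Gv R (fst p)\<^esub> phielt_path R c0 (from_rep R C v y2)"
    using carries_mult[OF c0 v a] s1 s2 by blast
  also have "\<dots> = Gv_class R (fst p) [(snd p, y1)] \<otimes>\<^bsub>Gv R (fst p)\<^esub> Gv_class R (fst p) [(snd p, y2)]"
    using s1 s2 c0 by simp
  also have "\<dots> = Gv_class R (fst p) [(snd p, y1 \<otimes>\<^bsub>FV R (fst p) (snd p)\<^esub> y2)]"
    using Gv_class_letter_mult[OF p1 y1 y2] .
  also have "\<dots> = phielt_path R c0 (from_rep R C v (y1 \<otimes>\<^bsub>FV R (fst p) (snd p)\<^esub> y2))"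
    using s12 c0 by simp
  finally show ?thesis using carries_inj[OF c0 v a] m s12 by metis
qed

lemma from_rep_one:
  assumes v: "v \<in> Vs R" and a: "a \<in> VGam R v" and C: "C = psi_class R (v, a)"
    and p: "p = some_elem C"
  shows "from_rep R C v \<one>\<^bsub>FV R (fst p) (snd p)\<^esub> = Gv_class R v []"
proof -
  have o: "\<one>\<^bsub>FV R v a\<^esub> \<in> carrier (FV R v a)"
    using group_FV[OF v a] by (simp add: group.is_monoid monoid.one_closed)
  have "from_rep R C v (to_rep R v a \<one>\<^bsub>FV R v a\<^esub>) = Gv_class R v [(a, \<one>\<^bsub>FV R v a\<^esub>)]"
    using from_rep_to_rep[OF v a o] C by simp
  moreover have "to_rep R v a \<one>\<^bsub>FV R v a\<^esub> = \<one>\<^bsub>FV R (fst p) (snd p)\<^esub>"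
    using to_rep_one[OF v a] C p by simp
  moreover have "Gv_class R v [(a, \<one>\<^bsub>FV R v a\<^esub>)] = Gv_class R v []"
    unfolding Gv_class_def by (rule gp_class_letter_one) (simp_all add: group_FV v a)
  ultimately show ?thesis by simp
qed

end

definition factor_emb :: "('v, 'e, 'a, 'g) ragg \<Rightarrow> 'e \<Rightarrow> 'a \<Rightarrow> 'a" where
  "factor_emb R e = (SOME f. inj_on f (VEdg R e) \<and> f ` VEdg R e \<subseteq> VGam R (src R e) \<and>
           (\<forall>a\<in>VEdg R e. \<forall>b\<in>VEdg R e. adjE R e a b \<longleftrightarrow> adjG R (src R e) (f a) (f b)) \<and>
           (\<forall>b\<in>VEdg R e. bij_betw (iota R e) (efactor R e b) (factor R (src R e) (f b))))"

context ragg_setting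
begin

lemma factor_emb_props:
  assumes e: "e \<in> Es R"
  shows "inj_on (factor_emb R e) (VEdg R e) \<and> factor_emb R e ` VEdg R e \<subseteq> VGam R (src R e) \<and>
           (\<forall>b\<in>VEdg R e. bij_betw (iota R e) (efactor R e b) (factor R (src R e) (factor_emb R e b)))"
proof -
  have "\<exists>f. inj_on f (VEdg R e) \<and> f ` VEdg R e \<subseteq> VGam R (src R e) \<and>
           (\<forall>a\<in>VEdg R e. \<forall>b\<in>VEdg R e. adjE R e a b \<longleftrightarrow> adjG R (src R e) (f a) (f b)) \<and>
           (\<forall>b\<in>VEdg R e. bij_betw (iota R e) (efactor R e b) (factor R (src R e) (f b)))"
    using graphical_embedding_iota[OF e] by (simp add: graphical_embedding_def)
  from someI_ex[OF this] show ?thesis unfolding factor_emb_def by blast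
qed

end

definition factor_emb_elt :: "('v, 'e, 'a, 'g) ragg \<Rightarrow> 'e \<Rightarrow> 'a \<Rightarrow> 'g \<Rightarrow> 'g" where
  "factor_emb_elt R e b z = (SOME z'. z' \<in> carrier (FV R (src R e) (factor_emb R e b)) \<and>
      iota R e (Ge_class R e [(b, z)]) = Gv_class R (src R e) [(factor_emb R e b, z')])"

definition emb_word :: "('v, 'e, 'a, 'g) ragg \<Rightarrow> 'e \<Rightarrow> ('a \<times> 'g) list \<Rightarrow> ('a \<times> 'g) list" where
  "emb_word R e w = map (\<lambda>p. (factor_emb R e (fst p), factor_emb_elt R e (fst p) (snd p))) w"

context ragg_setting
begin

lemma factor_emb_elt_spec:
  assumes e: "e \<in> Es R" and b: "b \<in> VEdg R e" and z: "z \<in> carrier (FE R e b)"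
  shows "factor_emb_elt R e b z \<in> carrier (FV R (src R e) (factor_emb R e b)) \<and>
    iota R e (Ge_class R e [(b, z)]) = Gv_class R (src R e) [(factor_emb R e b, factor_emb_elt R e b z)]"
proof -
  have bij: "bij_betw (iota R e) (efactor R e b) (factor R (src R e) (factor_emb R e b))"
    using factor_emb_props[OF e] b by blast
  have "Ge_class R e [(b, z)] \<in> efactor R e b" using z by (simp add: efactor_Ge_class)
  then have "iota R e (Ge_class R e [(b, z)]) \<in> factor R (src R e) (factor_emb R e b)"
    using bij by (auto simp: bij_betw_def)
  then have ex: "\<exists>z'. z' \<in> carrier (FV R (src R e) (factor_emb R e b)) \<and>
      iota R e (Ge_class R e [(b, z)]) = Gv_class R (src R e) [(factor_emb R e b, z')]"
    by (auto simp: factor_Gv_class)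
  show ?thesis unfolding factor_emb_elt_def using someI_ex[OF ex] .
qed

lemma factor_emb_in: "e \<in> Es R \<Longrightarrow> b \<in> VEdg R e \<Longrightarrow> factor_emb R e b \<in> VGam R (src R e)"
  using factor_emb_props by blast

lemma iota_emb_word:
  "e \<in> Es R \<Longrightarrow> w \<in> gp_words (VEdg R e) (FE R e) \<Longrightarrow>
    emb_word R e w \<in> gp_words (VGam R (src R e)) (FV R (src R e)) \<and>
    iota R e (Ge_class R e w) = Gv_class R (src R e) (emb_word R e w)"
proof (induction w)
  case Nil
  have "iota R e (\<one>\<^bsub>Ge R e\<^esub>) = \<one>\<^bsub>Gv R (src R e)\<^esub>"
    using hom_one[OF iota_hom group_Ge group_Gv] Nil by simp
  then show ?case by (simp add: emb_word_def Ge_class_def Gv_class_def Ge_def Gv_def gp_class_one)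
next
  case (Cons p w)
  obtain b z where p: "p = (b, z)" by force
  have b: "b \<in> VEdg R e" and z: "z \<in> carrier (FE R e b)" and w: "w \<in> gp_words (VEdg R e) (FE R e)"
    using Cons.prems p by auto
  note IH = Cons.IH[OF Cons.prems(1) w]
  note zs = factor_emb_elt_spec[OF Cons.prems(1) b z]
  have l: "[(factor_emb R e b, factor_emb_elt R e b z)] \<in> gp_words (VGam R (src R e)) (FV R (src R e))"
    using zs factor_emb_in[OF Cons.prems(1) b] by simp
  have "Ge_class R e (p # w) = Ge_class R e [p] \<otimes>\<^bsub>Ge R e\<^esub> Ge_class R e w"
    using gp_class_mult[of "[p]" "VEdg R e" "FE R e" w "adjE R e"] b z w p
    by (simp add: Ge_class_def Ge_def)
  then have "iota R e (Ge_class R e (p # w))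
      = iota R e (Ge_class R e [p]) \<otimes>\<^bsub>Gv R (src R e)\<^esub> iota R e (Ge_class R e w)"
    using iota_mult[OF Cons.prems(1)] b z w p by (simp add: Ge_carrier)
  also have "\<dots> = Gv_class R (src R e) [(factor_emb R e b, factor_emb_elt R e b z)] \<otimes>\<^bsub>Gv R (src R e)\<^esub>
      Gv_class R (src R e) (emb_word R e w)"
    using zs IH p by simp
  also have "\<dots> = Gv_class R (src R e) ((factor_emb R e b, factor_emb_elt R e b z) # emb_word R e w)"
    using gp_class_mult[OF l conjunct1[OF IH]] by (simp add: Gv_class_def Gv_def)
  finally show ?case using l IH p by (simp add: emb_word_def)
qed

lemma factor_emb_elt_edge:
  assumes e: "e \<in> Es R" and b: "b \<in> VEdg R e" and z: "z \<in> carrier (FE R e b)"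
  shows "phielt R e (Gv_class R (src R e) [(factor_emb R e b, factor_emb_elt R e b z)])
    = Gv_class R (tgt R e) [(factor_emb R (bar R e) b, factor_emb_elt R (bar R e) b z)]"
proof -
  have g: "Ge_class R e [(b, z)] \<in> carrier (Ge R e)" using b z by (simp add: Ge_carrier)
  have "phielt R e (Gv_class R (src R e) [(factor_emb R e b, factor_emb_elt R e b z)])
      = iota R (bar R e) (Ge_class R e [(b, z)])"
    using factor_emb_elt_spec[OF e b z] phielt_iota[OF e g] by simp
  also have "\<dots> = Gv_class R (tgt R e) [(factor_emb R (bar R e) b, factor_emb_elt R (bar R e) b z)]"
    using factor_emb_elt_spec[of "bar R e" b z] e b z by (simp add: VEdg_bar FE_bar Ge_class_bar)
  finally show ?thesis .
qed

lemma factor_emb_image: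
  "e \<in> Es R \<Longrightarrow> b \<in> VEdg R e \<Longrightarrow> factor R (src R e) (factor_emb R e b) = iota R e ` efactor R e b"
  using factor_emb_props by (metis bij_betw_imp_surj_on)

lemma factor_emb_subset_iota_image:
  assumes e: "e \<in> Es R" and b: "b \<in> VEdg R e"
  shows "factor R (src R e) (factor_emb R e b) \<subseteq> iota_image R e"
proof -
  have "efactor R e b \<subseteq> carrier (Ge R e)" by (auto simp: efactor_Ge_class Ge_carrier b)
  then show ?thesis using factor_emb_image[OF e b] by (auto simp: iota_image_def)
qed

lemma phiset_factor_emb:
  assumes e: "e \<in> Es R" and b: "b \<in> VEdg R e"
  shows "phiset R e (factor R (src R e) (factor_emb R e b)) = factor R (tgt R e) (factor_emb R (bar R e) b)"
proof -
  have sub: "efactor R e b \<subseteq> carrier (Ge R e)" by (auto simp: efactor_Ge_class Ge_carrier b)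
  have "phiset R e (factor R (src R e) (factor_emb R e b)) = phielt R e ` iota R e ` efactor R e b"
    using phiset_image[OF e factor_emb_subset_iota_image[OF e b]] factor_emb_image[OF e b] by simp
  also have "\<dots> = iota R (bar R e) ` efactor R e b"
    unfolding image_image using phielt_iota[OF e] sub by (auto intro!: image_cong)
  also have "\<dots> = factor R (tgt R e) (factor_emb R (bar R e) b)"
    using factor_emb_image[of "bar R e" b] e b by (simp add: VEdg_bar efactor_bar)
  finally show ?thesis .
qed

text \<open>Every factor of \<open>G\<^bsub>s(e)\<^esub>\<close> contained in \<open>\<iota>\<^sub>e(G\<^sub>e)\<close> is the image of a factor of \<open>G\<^sub>e\<close>: otherwise
  the retraction onto it would kill its nontrivial elements.\<close>

lemma factor_in_iota_image_is_emb:
  assumes e: "e \<in> Es R" and a: "a \<in> VGam R (src R e)" and sub: "factor R (src R e) a \<subseteq> iota_image R e"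
  shows "\<exists>b\<in>VEdg R e. a = factor_emb R e b"
proof (rule ccontr)
  assume N: "\<not> (\<exists>b\<in>VEdg R e. a = factor_emb R e b)"
  have u: "src R e \<in> Vs R" using e by simp
  have "\<one>\<^bsub>FV R (src R e) a\<^esub> \<in> carrier (FV R (src R e) a)"
    using group_FV[OF u a] by (simp add: group.is_monoid monoid.one_closed)
  then obtain x where x: "x \<in> carrier (FV R (src R e) a)" "x \<noteq> \<one>\<^bsub>FV R (src R e) a\<^esub>"
    using FV_nontrivial[OF u a] by blast
  have "Gv_class R (src R e) [(a, x)] \<in> iota_image R e" using sub x by (auto simp: factor_Gv_class)
  then obtain w where w: "w \<in> gp_words (VEdg R e) (FE R e)"
    "Gv_class R (src R e) [(a, x)] = iota R e (Ge_class R e w)"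
    by (auto simp: iota_image_def Ge_carrier)
  note iw = iota_emb_word[OF e w(1)]
  have "Gv_class R (src R e) [(a, x)] = Gv_class R (src R e) (emb_word R e w)" using w iw by simp
  then have "gp_equiv (VGam R (src R e)) (adjG R (src R e)) (FV R (src R e)) [(a, x)] (emb_word R e w)"
    using iw x a by (simp add: Gv_class_def gp_class_eq_iff)
  then have "gp_proj (FV R (src R e)) a [(a, x)] = gp_proj (FV R (src R e)) a (emb_word R e w)"
    using gp_proj_equiv group_FV[OF u a] simplicial_VGam[OF u] by metis
  moreover have "gp_proj (FV R (src R e)) a (emb_word R e w) = \<one>\<^bsub>FV R (src R e) a\<^esub>"
    using N w(1) by (intro gp_proj_other) (auto simp: emb_word_def gp_words_def)
  ultimately show False using x group_FV[OF u a] by (simp add: group.is_monoid monoid.r_one)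
qed

end

section \<open>The homomorphism into the graph product \<open>\<Psi>\<G>\<close>\<close>

lemma transport_carrier: "carrier (transport f G) = f ` carrier G"
  by (simp add: transport_def)

lemma transport_one: "\<one>\<^bsub>transport f G\<^esub> = f \<one>\<^bsub>G\<^esub>"
  by (simp add: transport_def)

lemma transport_mult:
  "inj f \<Longrightarrow> x \<in> carrier G \<Longrightarrow> y \<in> carrier G \<Longrightarrow> f x \<otimes>\<^bsub>transport f G\<^esub> f y = f (x \<otimes>\<^bsub>G\<^esub> y)"
  by (simp add: transport_def inv_into_f_f inj_on_subset[of f UNIV])

lemma Psi_F_Inl: "Psi_F R (Inl C) = transport Inl (FV R (fst (some_elem C)) (snd (some_elem C)))"
  by (simp add: Psi_F_def some_elem_def)

lemma Psi_F_Inr: "Psi_F R (Inr P) = transport Inr (integer_mod_group 2)"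
  by (simp add: Psi_F_def)

lemma Psi_F_Inr_carrier: "carrier (Psi_F R (Inr P)) = Inr ` {0, 1}"
  by (auto simp: Psi_F_Inr transport_carrier integer_mod_group_def)

lemma Psi_F_Inr_one: "\<one>\<^bsub>Psi_F R (Inr P)\<^esub> = Inr 0"
  by (simp add: Psi_F_Inr transport_one integer_mod_group_def)

lemma Psi_F_Inr_mult:
  "i \<in> {0, 1} \<Longrightarrow> j \<in> {0, 1} \<Longrightarrow> Inr i \<otimes>\<^bsub>Psi_F R (Inr P)\<^esub> Inr j = Inr ((i + j) mod 2)"
  by (auto simp: Psi_F_Inr transport_def integer_mod_group_def inv_into_f_f)

abbreviation psi_words :: "('v, 'e, 'a, 'g) ragg \<Rightarrow> ((('v \<times> 'a) set + 'e set) \<times> ('g + int)) list set"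
  where
  "psi_words R \<equiv> gp_words (Psi_V R) (Psi_F R)"

abbreviation psi_equiv :: "('v, 'e, 'a, 'g) ragg \<Rightarrow> ((('v \<times> 'a) set + 'e set) \<times> ('g + int)) list
    \<Rightarrow> ((('v \<times> 'a) set + 'e set) \<times> ('g + int)) list \<Rightarrow> bool" where
  "psi_equiv R \<equiv> gp_equiv (Psi_V R) (Psi_adj R) (Psi_F R)"

text \<open>A letter (a, x) of \<open>G\<^sub>u\<close> becomes the letter of the class of (u, a), with x transported to the
  factor of the class representative; an arrow e becomes the generator of \<open>\<int>/2\<close> at \<open>x\<^bsub>{e,\<bar>e}\<^esub>\<close>.
  An element of \<open>G\<^sub>u\<close> is first written as an arbitrary word.\<close>

definition psi_word_Gv :: "('v, 'e, 'a, 'g) ragg \<Rightarrow> 'v \<Rightarrow> ('a \<times> 'g) list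
    \<Rightarrow> ((('v \<times> 'a) set + 'e set) \<times> ('g + int)) list" where
  "psi_word_Gv R u = map (\<lambda>p. (Inl (psi_class R (u, fst p)), Inl (to_rep R u (fst p) (snd p))))"

definition psi_letter :: "('v, 'e, 'a, 'g) ragg \<Rightarrow> ('v, 'e, ('a \<times> 'g) list set) gletter
    \<Rightarrow> ((('v \<times> 'a) set + 'e set) \<times> ('g + int)) list" where
  "psi_letter R l = (case l of
      Arr e \<Rightarrow> [(Inr {e, bar R e}, Inr 1)]
    | Elt u g \<Rightarrow> psi_word_Gv R u (some_elem g))"

definition psi_word :: "('v, 'e, 'a, 'g) ragg \<Rightarrow> ('v, 'e, ('a \<times> 'g) list set) gletter list
    \<Rightarrow> ((('v \<times> 'a) set + 'e set) \<times> ('g + int)) list" where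
  "psi_word R w = concat (map (psi_letter R) w)"

lemma psi_word_append [simp]: "psi_word R (x @ y) = psi_word R x @ psi_word R y"
  by (simp add: psi_word_def)

lemma psi_word_Nil [simp]: "psi_word R [] = []"
  by (simp add: psi_word_def)

lemma psi_word_Cons: "psi_word R (l # w) = psi_letter R l @ psi_word R w"
  by (simp add: psi_word_def)

lemma psi_word_Gv_append [simp]: "psi_word_Gv R u (x @ y) = psi_word_Gv R u x @ psi_word_Gv R u y"
  by (simp add: psi_word_Gv_def)

definition valid_letter :: "('v, 'e, 'a, 'g) ragg \<Rightarrow> ('v, 'e, ('a \<times> 'g) list set) gletter \<Rightarrow> bool"
  where
  "valid_letter R l = (case l of Arr e \<Rightarrow> e \<in> Es R | Elt u g \<Rightarrow> u \<in> Vs R \<and> g \<in> carrier (Gv R u))"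

lemma word_path_valid_letter: "word_path R u v w \<Longrightarrow> \<forall>l\<in>set w. valid_letter R l"
  by (induction R u v w rule: word_path.induct) (auto simp: valid_letter_def)

lemma some_elem_Gv:
  assumes "g \<in> carrier (Gv R u)"
  shows "some_elem g \<in> gp_words (VGam R u) (FV R u) \<and> Gv_class R u (some_elem g) = g"
  using assms qclass_some_elem by (fastforce simp: Gv_carrier Gv_class_def gp_class_def)

context ragg_conditions
begin

lemma Psi_V_Inl: "u \<in> Vs R \<Longrightarrow> a \<in> VGam R u \<Longrightarrow> Inl (psi_class R (u, a)) \<in> Psi_V R"
  by (auto simp: Psi_V_def disj_union_def)

lemma Psi_V_Inr: "e \<in> Es R \<Longrightarrow> Inr {e, bar R e} \<in> Psi_V R"
  by (auto simp: Psi_V_def)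

lemma Inl_to_rep_carrier:
  "u \<in> Vs R \<Longrightarrow> a \<in> VGam R u \<Longrightarrow> x \<in> carrier (FV R u a) \<Longrightarrow>
    Inl (to_rep R u a x) \<in> carrier (Psi_F R (Inl (psi_class R (u, a))))"
  using to_rep_spec[OF _ _ _ refl] by (simp add: Psi_F_Inl transport_carrier)

lemma psi_word_Gv_psi_words:
  "u \<in> Vs R \<Longrightarrow> w \<in> gp_words (VGam R u) (FV R u) \<Longrightarrow> psi_word_Gv R u w \<in> psi_words R"
  by (induction w) (auto simp: psi_word_Gv_def Psi_V_Inl Inl_to_rep_carrier)

lemma psi_letter_psi_words: "valid_letter R l \<Longrightarrow> psi_letter R l \<in> psi_words R"
  by (cases l)
    (auto simp: valid_letter_def psi_letter_def Psi_V_Inr Psi_F_Inr_carrier psi_word_Gv_psi_words some_elem_Gv)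

lemma psi_word_psi_words: "\<forall>l\<in>set w. valid_letter R l \<Longrightarrow> psi_word R w \<in> psi_words R"
  by (induction w) (auto simp: psi_word_Cons psi_letter_psi_words)

lemma psi_word_Gv_basic:
  assumes u: "u \<in> Vs R" and b: "gp_basic (VGam R u) (adjG R u) (FV R u) l r"
  shows "gp_basic (Psi_V R) (Psi_adj R) (Psi_F R) (psi_word_Gv R u l) (psi_word_Gv R u r)"
  using b unfolding gp_basic_def[of "VGam R u"]
proof (elim disjE bexE conjE)
  fix a x y assume a: "a \<in> VGam R u" and x: "x \<in> carrier (FV R u a)" and y: "y \<in> carrier (FV R u a)"
    and l: "l = [(a, x), (a, y)]" and r: "r = [(a, x \<otimes>\<^bsub>FV R u a\<^esub> y)]"
  define C where "C = psi_class R (u, a)"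
  have m: "Inl (to_rep R u a x) \<otimes>\<^bsub>Psi_F R (Inl C)\<^esub> Inl (to_rep R u a y)
      = Inl (to_rep R u a (x \<otimes>\<^bsub>FV R u a\<^esub> y))"
    using to_rep_mult[OF u a x y] to_rep_spec[OF u a x] to_rep_spec[OF u a y] unfolding C_def
    by (simp add: Psi_F_Inl transport_mult)
  show ?thesis unfolding gp_basic_def
    by (intro disjI1 bexI[where x = "Inl C"])
      (use l r m Inl_to_rep_carrier[OF u a x] Inl_to_rep_carrier[OF u a y] Psi_V_Inl[OF u a] in
        \<open>auto simp: psi_word_Gv_def C_def\<close>)
next
  fix a assume a: "a \<in> VGam R u" and l: "l = [(a, \<one>\<^bsub>FV R u a\<^esub>)]" and r: "r = []"
  have "Inl (to_rep R u a \<one>\<^bsub>FV R u a\<^esub>) = \<one>\<^bsub>Psi_F R (Inl (psi_class R (u, a)))\<^esub>"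
    using to_rep_one[OF u a refl] by (simp add: Psi_F_Inl transport_one)
  then show ?thesis
    unfolding gp_basic_def using l r Psi_V_Inl[OF u a] by (auto simp: psi_word_Gv_def)
next
  fix a b x y assume a: "a \<in> VGam R u" and b: "b \<in> VGam R u" and ab: "adjG R u a b"
    and x: "x \<in> carrier (FV R u a)" and y: "y \<in> carrier (FV R u b)"
    and l: "l = [(a, x), (b, y)]" and r: "r = [(b, y), (a, x)]"
  have ne: "a \<noteq> b" using ab simplicial_VGam[OF u] by (auto simp: simplicial_def)
  have adj: "Psi_adj R (Inl (psi_class R (u, a))) (Inl (psi_class R (u, b)))"
  proof -
    have "(u, a) \<in> psi_class R (u, a)" "(u, b) \<in> psi_class R (u, b)" by (rule psi_class_refl)+
    then show ?thesis
      unfolding Psi_adj_def using Psi_V_Inl[OF u a] Psi_V_Inl[OF u b] psi_class_neq[OF u a b ne] u ab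
      by auto
  qed
  show ?thesis unfolding gp_basic_def
    using l r adj Inl_to_rep_carrier[OF u a x] Inl_to_rep_carrier[OF u b y] Psi_V_Inl[OF u a] Psi_V_Inl[OF u b]
    by (auto simp: psi_word_Gv_def)
qed

lemma psi_word_Gv_equiv:
  assumes u: "u \<in> Vs R" and "gp_equiv (VGam R u) (adjG R u) (FV R u) w w'"
  shows "psi_equiv R (psi_word_Gv R u w) (psi_word_Gv R u w')"
  using assms(2) unfolding gp_equiv_def
proof (rule qrel_map[rotated])
  fix x l r y assume b: "gp_basic (VGam R u) (adjG R u) (FV R u) l r"
    and "x @ l @ y \<in> gp_words (VGam R u) (FV R u)" "x @ r @ y \<in> gp_words (VGam R u) (FV R u)"
  then have "psi_equiv R (psi_word_Gv R u x @ psi_word_Gv R u l @ psi_word_Gv R u y)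
      (psi_word_Gv R u x @ psi_word_Gv R u r @ psi_word_Gv R u y)"
    using psi_word_Gv_basic[OF u b] psi_word_Gv_psi_words[OF u] by (intro gp_equiv_rewrite) auto
  then show "qrel (psi_words R) (rewrite_step (gp_basic (Psi_V R) (Psi_adj R) (Psi_F R)))
      (psi_word_Gv R u (x @ l @ y)) (psi_word_Gv R u (x @ r @ y))"
    by (simp add: gp_equiv_def)
qed

lemma psi_word_Gv_cong:
  assumes u: "u \<in> Vs R"
    and w: "w \<in> gp_words (VGam R u) (FV R u)" "w' \<in> gp_words (VGam R u) (FV R u)"
    and eq: "Gv_class R u w = Gv_class R u w'"
  shows "psi_equiv R (psi_word_Gv R u w) (psi_word_Gv R u w')"
  using psi_word_Gv_equiv[OF u] eq w by (simp add: Gv_class_eq_iff)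

lemma psi_equiv_commute_list:
  "(\<forall>p\<in>set N. gp_basic (Psi_V R) (Psi_adj R) (Psi_F R) [p, q] [q, p]) \<Longrightarrow> N \<in> psi_words R \<Longrightarrow>
    [q] \<in> psi_words R \<Longrightarrow> psi_equiv R (N @ [q]) ([q] @ N)"
proof (induction N)
  case Nil then show ?case by simp
next
  case (Cons p N)
  have p: "[p] \<in> psi_words R" and N: "N \<in> psi_words R" using Cons.prems by auto
  have 1: "psi_equiv R ([p] @ (N @ [q])) ([p] @ ([q] @ N))"
    using gp_equiv_append[OF gp_equiv_refl Cons.IH[OF _ N Cons.prems(3)] p] Cons.prems(1) Cons.prems(3) N
    by simp
  have 2: "psi_equiv R ([] @ [p, q] @ N) ([] @ [q, p] @ N)"
    by (rule gp_equiv_rewrite) (use Cons.prems p N in auto)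
  show ?case using gp_equiv_trans[OF 1] 2 by simp
qed

lemma psi_word_Gv_emb_word:
  "e \<in> Es R \<Longrightarrow> w \<in> gp_words (VEdg R e) (FE R e) \<Longrightarrow>
    psi_word_Gv R (src R e) (emb_word R e w) = psi_word_Gv R (tgt R e) (emb_word R (bar R e) w)"
proof (induction w)
  case Nil then show ?case by (simp add: emb_word_def psi_word_Gv_def)
next
  case (Cons p w)
  obtain b z where p: "p = (b, z)" by force
  have b: "b \<in> VEdg R e" and z: "z \<in> carrier (FE R e b)" and w: "w \<in> gp_words (VEdg R e) (FE R e)"
    using Cons.prems p by auto
  note e = Cons.prems(1)
  have zb: "z \<in> carrier (FE R (bar R e) b)" using z FE_bar[OF e b] by simp
  have bb: "b \<in> VEdg R (bar R e)" using b VEdg_bar[OF e] by simp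
  have "factor_emb R (bar R e) b \<in> VGam R (tgt R e)" using factor_emb_in[OF bar_Es[OF e] bb] e by simp
  moreover have "factor_emb_elt R (bar R e) b z \<in> carrier (FV R (tgt R e) (factor_emb R (bar R e) b))"
    using factor_emb_elt_spec[OF bar_Es[OF e] bb zb] e by simp
  ultimately have re: "psi_class R (tgt R e, factor_emb R (bar R e) b) = psi_class R (src R e, factor_emb R e b) \<and>
      to_rep R (tgt R e) (factor_emb R (bar R e) b) (factor_emb_elt R (bar R e) b z)
        = to_rep R (src R e) (factor_emb R e b) (factor_emb_elt R e b z)"
    using to_rep_edge[OF e factor_emb_in[OF e b] _ phiset_factor_emb[OF e b]
        conjunct1[OF factor_emb_elt_spec[OF e b z]] _ factor_emb_elt_edge[OF e b z]]
    by blast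
  show ?case using Cons.IH[OF e w] re p by (simp add: emb_word_def psi_word_Gv_def)
qed

lemma emb_word_commutes_edge:
  assumes e: "e \<in> Es R" and w: "w \<in> gp_words (VEdg R e) (FE R e)"
  shows "\<forall>p\<in>set (psi_word_Gv R (src R e) (emb_word R e w)).
    gp_basic (Psi_V R) (Psi_adj R) (Psi_F R) [p, (Inr {e, bar R e}, Inr 1)] [(Inr {e, bar R e}, Inr 1), p]"
proof
  fix p assume "p \<in> set (psi_word_Gv R (src R e) (emb_word R e w))"
  then obtain b z where bz: "(b, z) \<in> set w"
    "p = (Inl (psi_class R (src R e, factor_emb R e b)),
          Inl (to_rep R (src R e) (factor_emb R e b) (factor_emb_elt R e b z)))"
    by (auto simp: psi_word_Gv_def emb_word_def)
  have s: "src R e \<in> Vs R" using e by simp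
  have b: "b \<in> VEdg R e" and z: "z \<in> carrier (FE R e b)" using bz w by (auto simp: gp_words_def)
  have fb: "factor_emb R e b \<in> VGam R (src R e)" using factor_emb_in[OF e b] .
  have "edge_adj R {e, bar R e} (psi_class R (src R e, factor_emb R e b))"
    unfolding edge_adj_def using fb factor_emb_subset_iota_image[OF e b]
      psi_class_refl[of "(src R e, factor_emb R e b)" R]
    by (auto simp: iota_image_def)
  then have "Psi_adj R (Inl (psi_class R (src R e, factor_emb R e b))) (Inr {e, bar R e})"
    unfolding Psi_adj_def using Psi_V_Inl[OF s fb] Psi_V_Inr[OF e] by simp
  moreover have "factor_emb_elt R e b z \<in> carrier (FV R (src R e) (factor_emb R e b))"
    using factor_emb_elt_spec[OF e b z] by blast
  ultimately show "gp_basic (Psi_V R) (Psi_adj R) (Psi_F R) [p, (Inr {e, bar R e}, Inr 1)] [(Inr {e, bar R e}, Inr 1), p]"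
    unfolding gp_basic_def using bz(2) Psi_V_Inl[OF s fb] Psi_V_Inr[OF e] Inl_to_rep_carrier[OF s fb]
    by (auto simp: Psi_F_Inr_carrier)
qed

lemma psi_word_mult:
  assumes u: "u \<in> Vs R" and x: "x \<in> carrier (Gv R u)" and y: "y \<in> carrier (Gv R u)"
  shows "psi_equiv R (psi_word R [Elt u x, Elt u y]) (psi_word R [Elt u (x \<otimes>\<^bsub>Gv R u\<^esub> y)])"
proof -
  note sx = some_elem_Gv[OF x] and sy = some_elem_Gv[OF y] and sxy = some_elem_Gv[OF Gv_mult_closed[OF u x y]]
  then have eq: "Gv_class R u (some_elem x @ some_elem y) = Gv_class R u (some_elem (x \<otimes>\<^bsub>Gv R u\<^esub> y))"
    by (simp add: Gv_class_mult[symmetric])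
  show ?thesis
    using psi_word_Gv_cong[OF u _ _ eq] sx sy sxy by (simp add: psi_word_def psi_letter_def)
qed

lemma psi_word_one: "u \<in> Vs R \<Longrightarrow> psi_equiv R (psi_word R [Elt u \<one>\<^bsub>Gv R u\<^esub>]) []"
  using psi_word_Gv_cong[of u "some_elem \<one>\<^bsub>Gv R u\<^esub>" "[]"] some_elem_Gv[OF Gv_one_closed]
  by (simp add: psi_word_def psi_letter_def psi_word_Gv_def Gv_class_Nil)

lemma psi_word_arr_bar:
  assumes e: "e \<in> Es R"
  shows "psi_equiv R (psi_word R [Arr e, Arr (bar R e)]) []"
proof -
  let ?P = "{e, bar R e}"
  have PV: "Inr ?P \<in> Psi_V R" using Psi_V_Inr[OF e] .
  have c: "Inr 1 \<in> carrier (Psi_F R (Inr ?P))" "Inr 0 \<in> carrier (Psi_F R (Inr ?P))"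
    by (simp_all add: Psi_F_Inr_carrier)
  have "psi_equiv R [(Inr ?P, Inr 1), (Inr ?P, Inr 1)] [(Inr ?P, Inr 1 \<otimes>\<^bsub>Psi_F R (Inr ?P)\<^esub> Inr 1)]"
    using PV c Psi_F_Inr_mult[of 1 1 R ?P] by (intro gp_equiv_mult) simp_all
  moreover have "psi_equiv R [(Inr ?P, \<one>\<^bsub>Psi_F R (Inr ?P)\<^esub>)] []"
    using PV c by (intro gp_equiv_one) (simp_all add: Psi_F_Inr_one)
  moreover have "{bar R e, bar R (bar R e)} = ?P" using e by auto
  ultimately show ?thesis
    using Psi_F_Inr_mult[of 1 1 R ?P] Psi_F_Inr_one[of R ?P] gp_equiv_trans
    by (fastforce simp: psi_word_def psi_letter_def)
qed

text \<open>Relation \<open>\<iota>\<^sub>e(g) e = e \<iota>\<^sub>\<bar>e(g)\<close>: both sides of an edge give the same word of \<open>\<Psi>\<G>\<close>, and every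
  letter of it is adjacent to \<open>x\<^bsub>{e,\<bar>e}\<^esub>\<close>.\<close>

lemma psi_word_edge:
  assumes e: "e \<in> Es R" and g: "g \<in> carrier (Ge R e)"
  shows "psi_equiv R (psi_word R [Elt (src R e) (iota R e g), Arr e])
    (psi_word R [Arr e, Elt (tgt R e) (iota R (bar R e) g)])"
proof -
  obtain w where w: "w \<in> gp_words (VEdg R e) (FE R e)" "g = Ge_class R e w"
    using g by (auto simp: Ge_carrier)
  have s: "src R e \<in> Vs R" and t: "tgt R e \<in> Vs R" using e by auto
  note iw = iota_emb_word[OF e w(1)]
  have wb: "w \<in> gp_words (VEdg R (bar R e)) (FE R (bar R e))" using w(1) Ge_words_bar[OF e] by simp
  note iwb = iota_emb_word[OF bar_Es[OF e] wb]
  note sw = some_elem_Gv[OF iota_closed[OF e g]] and swb = some_elem_Gv[OF iota_bar_closed[OF e g]]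
  let ?X = "(Inr {e, bar R e}, Inr (1::int))"
  let ?N = "psi_word_Gv R (src R e) (emb_word R e w)"
  have N1: "psi_equiv R (psi_word_Gv R (src R e) (some_elem (iota R e g))) ?N"
    using psi_word_Gv_cong[OF s] sw iw w(2) by simp
  have N2: "psi_equiv R (psi_word_Gv R (tgt R e) (some_elem (iota R (bar R e) g))) ?N"
    using psi_word_Gv_cong[OF t] swb iwb w(2) Ge_class_bar[OF e] psi_word_Gv_emb_word[OF e w(1)] e
    by simp
  have NPW: "?N \<in> psi_words R" using psi_word_Gv_psi_words[OF s] iw by simp
  have XPW: "[?X] \<in> psi_words R" using Psi_V_Inr[OF e] by (simp add: Psi_F_Inr_carrier)
  have "psi_equiv R (?N @ [?X]) ([?X] @ ?N)"
    using psi_equiv_commute_list[OF emb_word_commutes_edge[OF e w(1)] NPW XPW] .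
  moreover have "psi_equiv R (psi_word_Gv R (src R e) (some_elem (iota R e g)) @ [?X]) (?N @ [?X])"
    using gp_equiv_append[OF N1 gp_equiv_refl _ XPW] psi_word_Gv_psi_words[OF s] sw by simp
  moreover have "psi_equiv R ([?X] @ ?N) ([?X] @ psi_word_Gv R (tgt R e) (some_elem (iota R (bar R e) g)))"
    using gp_equiv_append[OF gp_equiv_refl gp_equiv_sym[OF N2] XPW] psi_word_Gv_psi_words[OF t] swb
    by simp
  ultimately show ?thesis
    using gp_equiv_trans by (simp add: psi_word_def psi_letter_def) blast
qed

lemma psi_word_basic: "groupoid_basic R l r \<Longrightarrow> psi_equiv R (psi_word R l) (psi_word R r)"
  unfolding groupoid_basic_def
  by (elim disjE bexE conjE) (simp_all add: psi_word_mult psi_word_one psi_word_arr_bar psi_word_edge)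

lemma psi_word_equiv:
  "qrel {w. word_path R \<omega> \<omega> w} (rewrite_step (groupoid_basic R)) w w' \<Longrightarrow>
    psi_equiv R (psi_word R w) (psi_word R w')"
  unfolding gp_equiv_def
proof (erule qrel_map[rotated])
  fix x l r y assume b: "groupoid_basic R l r" and "x @ l @ y \<in> {w. word_path R \<omega> \<omega> w}"
  then have "word_path R \<omega> \<omega> (x @ l @ y)" by simp
  then have "\<forall>m\<in>set (x @ l @ y). valid_letter R m" by (rule word_path_valid_letter)
  then have "psi_word R x \<in> psi_words R" "psi_word R y \<in> psi_words R" "psi_word R l \<in> psi_words R"
    using psi_word_psi_words[of x] psi_word_psi_words[of y] psi_word_psi_words[of l] by auto
  then have "psi_equiv R (psi_word R x @ psi_word R l @ psi_word R y) (psi_word R x @ psi_word R r @ psi_word R y)"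
    using gp_equiv_context[OF psi_word_basic[OF b]] by simp
  then show "qrel (psi_words R) (rewrite_step (gp_basic (Psi_V R) (Psi_adj R) (Psi_F R)))
      (psi_word R (x @ l @ y)) (psi_word R (x @ r @ y))"
    by (simp add: gp_equiv_def)
qed

end

fun word_end :: "('v, 'e, 'a, 'g) ragg \<Rightarrow> 'v \<Rightarrow> ('v, 'e, 'x) gletter list \<Rightarrow> 'v" where
  "word_end R v [] = v"
| "word_end R v (Arr e # w) = word_end R (tgt R e) w"
| "word_end R v (Elt x g # w) = word_end R v w"

lemma word_end_append [simp]: "word_end R v (w1 @ w2) = word_end R (word_end R v w1) w2"
  by (induction R v w1 rule: word_end.induct) auto

lemma word_path_word_end: "word_path R u v w \<Longrightarrow> word_end R u w = v"
  by (induction R u v w rule: word_path.induct) auto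

lemma word_path_unique_end: "word_path R u v w \<Longrightarrow> word_path R u v' w \<Longrightarrow> v = v'"
  using word_path_word_end by metis

lemma word_path_append:
  "word_path R u v (w1 @ w2) \<longleftrightarrow> (\<exists>m. word_path R u m w1 \<and> word_path R m v w2)"
  by (induction R u v w1 rule: word_path.induct) auto

definition paths :: "('v, 'e, 'a, 'g) ragg \<Rightarrow> 'v \<Rightarrow> 'v \<Rightarrow> ('v, 'e, ('a \<times> 'g) list set) gletter list set" where
  "paths R \<omega> m = {w. word_path R \<omega> m w}"

definition paths_from :: "('v, 'e, 'a, 'g) ragg \<Rightarrow> 'v \<Rightarrow> ('v, 'e, ('a \<times> 'g) list set) gletter list set" where
  "paths_from R \<omega> = {w. \<exists>m. word_path R \<omega> m w}"

abbreviation path_equiv :: "('v, 'e, 'a, 'g) ragg \<Rightarrow> 'v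
    \<Rightarrow> ('v, 'e, ('a \<times> 'g) list set) gletter list \<Rightarrow> ('v, 'e, ('a \<times> 'g) list set) gletter list \<Rightarrow> bool" where
  "path_equiv R \<omega> \<equiv> qrel (paths_from R \<omega>) (rewrite_step (groupoid_basic R))"

lemma fund_group_paths: "fund_group R \<omega> = quot_monoid (paths R \<omega> \<omega>) (rewrite_step (groupoid_basic R))"
  by (simp add: fund_group_def paths_def)

lemma paths_app_closed: "app_closed (paths R \<omega> \<omega>)"
  unfolding app_closed_def paths_def by (auto simp: word_path_append)

context ragg_setting
begin

lemma word_path_Vs: "word_path R u v w \<Longrightarrow> u \<in> Vs R \<Longrightarrow> v \<in> Vs R"
proof (induction w arbitrary: u)
  case (Cons l w)
  then show ?case by (cases l) auto
qed simp

lemma groupoid_basic_same_end: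
  "groupoid_basic R l r \<Longrightarrow> word_path R a b l \<Longrightarrow> word_path R a b' r \<Longrightarrow> b = b'"
  unfolding groupoid_basic_def by auto

lemma rewrite_step_same_end:
  assumes "rewrite_step (groupoid_basic R) x y" and x: "word_path R w m x"
    and y: "word_path R w m' y"
  shows "m = m'"
proof -
  obtain u l r v where b: "groupoid_basic R l r" and xy: "x = u @ l @ v" "y = u @ r @ v"
    using assms(1) unfolding rewrite_step_def by blast
  obtain m1 m2 where 1: "word_path R w m1 u" "word_path R m1 m2 l" "word_path R m2 m v"
    using x unfolding xy word_path_append by blast
  obtain m1' m2' where 2: "word_path R w m1' u" "word_path R m1' m2' r" "word_path R m2' m' v"
    using y unfolding xy word_path_append by blast
  have "m1 = m1'" using 1 2 word_path_unique_end by metis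
  then have "m2 = m2'" using groupoid_basic_same_end[OF b 1(2)] 2(2) by simp
  then show ?thesis using 1 2 word_path_unique_end by metis
qed

text \<open>The relations of the fundamental groupoid never change the endpoint of a path, so an
  equivalence of paths from \<open>\<omega>\<close> passes only through paths with the same endpoints.\<close>

lemma path_equiv_paths:
  assumes "path_equiv R \<omega> x y" and x: "word_path R \<omega> m x"
  shows "qrel (paths R \<omega> m) (rewrite_step (groupoid_basic R)) x y"
  using assms(1) unfolding qrel_def[of "paths_from R \<omega>"]
proof (induction rule: rtranclp_induct)
  case (step y z)
  have y: "y \<in> paths R \<omega> m" using qrel_in_words[OF step.IH] x by (simp add: paths_def)
  obtain m' where z: "word_path R \<omega> m' z" using step.hyps(2) by (auto simp: paths_from_def)
  have st: "rewrite_step (groupoid_basic R) y z \<or> rewrite_step (groupoid_basic R) z y"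
    using step.hyps(2) by blast
  then have "m = m'" using rewrite_step_same_end y z by (metis mem_Collect_eq paths_def)
  then have "z \<in> paths R \<omega> m" using z by (simp add: paths_def)
  then have "qrel (paths R \<omega> m) (rewrite_step (groupoid_basic R)) y z"
    using y st qrel_stepI qrel_sym by metis
  then show ?case using step.IH qrel_trans by metis
qed simp

lemma path_equiv_end: "path_equiv R \<omega> x y \<Longrightarrow> word_path R \<omega> m x \<Longrightarrow> word_path R \<omega> m y"
  using path_equiv_paths qrel_in_words by (fastforce simp: paths_def)

lemma path_equiv_append:
  assumes "path_equiv R \<omega> x x'" and "word_path R \<omega> m x" and z: "word_path R m m' z"
  shows "path_equiv R \<omega> (x @ z) (x' @ z)"
  using path_equiv_paths[OF assms(1,2)]
proof (rule qrel_map[rotated])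
  fix u l r v assume "groupoid_basic R l r" "u @ l @ v \<in> paths R \<omega> m" "u @ r @ v \<in> paths R \<omega> m"
  moreover from this have "(u @ l @ v) @ z \<in> paths_from R \<omega>" "(u @ r @ v) @ z \<in> paths_from R \<omega>"
    using z by (auto simp: paths_def paths_from_def word_path_append)
  ultimately show "path_equiv R \<omega> ((u @ l @ v) @ z) ((u @ r @ v) @ z)"
    using qrel_rewrite_stepI[of "groupoid_basic R" l r u "v @ z"] by simp
qed

lemma path_equiv_basic:
  assumes "groupoid_basic R l r" "word_path R \<omega> m \<delta>" "word_path R m m' l" "word_path R m m' r"
  shows "path_equiv R \<omega> (\<delta> @ l) (\<delta> @ r)"
  using qrel_rewrite_stepI[of "groupoid_basic R" l r \<delta> "[]" "paths_from R \<omega>"] assms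
  by (auto simp: paths_from_def word_path_append)

lemma path_equiv_mult:
  "word_path R \<omega> m \<delta> \<Longrightarrow> m \<in> Vs R \<Longrightarrow> g \<in> carrier (Gv R m) \<Longrightarrow> h \<in> carrier (Gv R m) \<Longrightarrow>
    path_equiv R \<omega> (\<delta> @ [Elt m g, Elt m h]) (\<delta> @ [Elt m (g \<otimes>\<^bsub>Gv R m\<^esub> h)])"
  by (rule path_equiv_basic) (auto simp: groupoid_basic_def Gv_mult_closed)

lemma path_equiv_one:
  "word_path R \<omega> m \<delta> \<Longrightarrow> m \<in> Vs R \<Longrightarrow> path_equiv R \<omega> (\<delta> @ [Elt m \<one>\<^bsub>Gv R m\<^esub>]) \<delta>"
  using path_equiv_basic[of "[Elt m \<one>\<^bsub>Gv R m\<^esub>]" "[]" \<omega> m \<delta> m]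
  by (auto simp: groupoid_basic_def Gv_one_closed)

end

section \<open>Lifting words of \<open>\<Psi>\<G>\<close> to paths\<close>

text \<open>Read from the vertex v, a letter of a class C becomes the element of the factor of \<open>G\<^sub>v\<close> in C
  corresponding to it, and the generator of \<open>x\<^bsub>{e,\<bar>e}\<^esub>\<close> becomes whichever of e, \<open>\<bar>e\<close> starts at v
  (there is at most one by (iii)); all other letters are dropped.\<close>

definition lift_letter :: "('v, 'e, 'a, 'g) ragg \<Rightarrow> (('v \<times> 'a) set + 'e set) \<times> ('g + int) \<Rightarrow> 'v
    \<Rightarrow> ('v, 'e, ('a \<times> 'g) list set) gletter list" where
  "lift_letter R l v = (case fst l of
      Inr P \<Rightarrow> (if snd l = Inr 1 \<and> (\<exists>e\<in>P. e \<in> Es R \<and> src R e = v)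
                then [Arr (SOME e. e \<in> P \<and> e \<in> Es R \<and> src R e = v)] else [])
    | Inl C \<Rightarrow> (if v \<in> Vs R \<and> (\<exists>a. (v, a) \<in> C \<and> a \<in> VGam R v)
                then [Elt v (from_rep R C v (projl (snd l)))] else []))"

fun lift_word :: "('v, 'e, 'a, 'g) ragg \<Rightarrow> ((('v \<times> 'a) set + 'e set) \<times> ('g + int)) list \<Rightarrow> 'v
    \<Rightarrow> ('v, 'e, ('a \<times> 'g) list set) gletter list" where
  "lift_word R [] v = []"
| "lift_word R (l # ls) v = lift_letter R l v @ lift_word R ls (word_end R v (lift_letter R l v))"

lemma lift_word_append:
  "lift_word R (xs @ ys) v = lift_word R xs v @ lift_word R ys (word_end R v (lift_word R xs v))"
  by (induction xs arbitrary: v) auto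

definition is_psi_class :: "('v, 'e, 'a, 'g) ragg \<Rightarrow> ('v \<times> 'a) set \<Rightarrow> bool" where
  "is_psi_class R C = (\<exists>u a. u \<in> Vs R \<and> a \<in> VGam R u \<and> C = psi_class R (u, a))"

lemma is_psi_class_eq: "is_psi_class R C \<Longrightarrow> (v, a) \<in> C \<Longrightarrow> C = psi_class R (v, a)"
  unfolding is_psi_class_def using psi_class_eq by metis

lemma Psi_V_cases:
  "z \<in> Psi_V R \<Longrightarrow> (\<exists>C. z = Inl C \<and> is_psi_class R C) \<or> (\<exists>e\<in>Es R. z = Inr {e, bar R e})"
  by (auto simp: Psi_V_def is_psi_class_def disj_union_def)

lemma Psi_F_Inl_carrier:
  "x \<in> carrier (Psi_F R (Inl C)) \<Longrightarrow> \<exists>y. x = Inl y \<and> y \<in> carrier (FV R (fst (some_elem C)) (snd (some_elem C)))"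
  by (auto simp: Psi_F_Inl transport_carrier)

lemma Psi_F_Inr_cases: "x \<in> carrier (Psi_F R (Inr P)) \<Longrightarrow> x = Inr 0 \<or> x = Inr 1"
  by (auto simp: Psi_F_Inr_carrier)

lemma lift_letter_Inr_0: "lift_letter R (Inr P, Inr 0) v = []"
  by (simp add: lift_letter_def)

lemma lift_letter_Inr_none: "\<not> (\<exists>e\<in>P. e \<in> Es R \<and> src R e = v) \<Longrightarrow> lift_letter R (Inr P, y) v = []"
  by (simp add: lift_letter_def)

lemma lift_letter_Inl_none: "\<not> (\<exists>a. (v, a) \<in> C \<and> a \<in> VGam R v) \<Longrightarrow> lift_letter R (Inl C, y) v = []"
  by (simp add: lift_letter_def)

lemma lift_letter_Inl:
  "v \<in> Vs R \<Longrightarrow> (v, a) \<in> C \<Longrightarrow> a \<in> VGam R v \<Longrightarrow> lift_letter R (Inl C, Inl y) v = [Elt v (from_rep R C v y)]"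
  by (auto simp: lift_letter_def)

lemma lift_letter_Inl_end: "word_end R v (lift_letter R (Inl C, x) v) = v"
  by (simp add: lift_letter_def)

context ragg_conditions
begin

lemma lift_letter_Inr_1:
  assumes e0: "e0 \<in> Es R" and e: "e \<in> {e0, bar R e0}" and v: "src R e = v"
  shows "lift_letter R (Inr {e0, bar R e0}, Inr 1) v = [Arr e]"
proof -
  have eE: "e \<in> Es R" using e e0 by auto
  have uniq: "e' = e" if "e' \<in> {e0, bar R e0}" "src R e' = v" for e'
  proof -
    have "e' \<in> {e, bar R e}" using that(1) e e0 by auto
    moreover have "src R (bar R e) \<noteq> v" using condition_iii eE v unfolding cond_iii_def by force
    ultimately show ?thesis using that(2) by blast
  qed
  have "(SOME e'. e' \<in> {e0, bar R e0} \<and> e' \<in> Es R \<and> src R e' = v) = e"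
    by (rule some_equality) (use e eE v uniq in blast)+
  then show ?thesis using e eE v by (auto simp: lift_letter_def)
qed

lemma from_rep_in:
  assumes "v \<in> Vs R" "(v, a) \<in> C" "a \<in> VGam R v" "is_psi_class R C"
    and "y \<in> carrier (FV R (fst (some_elem C)) (snd (some_elem C)))"
  shows "from_rep R C v y \<in> factor R v a \<and> from_rep R C v y \<in> carrier (Gv R v)"
  using from_rep_spec[OF assms(1,3) is_psi_class_eq[OF assms(4,2)] refl] assms(5) factor_subset[OF assms(1,3)]
  by blast

lemma edge_adj_edge:
  assumes e0: "e0 \<in> Es R" and e: "e \<in> {e0, bar R e0}" and ea: "edge_adj R {e0, bar R e0} C"
    and C: "is_psi_class R C"
  shows "\<exists>a b. a \<in> VGam R (src R e) \<and> b \<in> VGam R (tgt R e) \<and> (src R e, a) \<in> C \<and> (tgt R e, b) \<in> C \<and>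
    factor R (src R e) a \<subseteq> iota_image R e \<and> phiset R e (factor R (src R e) a) = factor R (tgt R e) b"
proof -
  have eE: "e \<in> Es R" and pair: "{e0, bar R e0} = {e, bar R e}" using e e0 by auto
  obtain e' a' where e': "e' \<in> {e, bar R e}" "a' \<in> VGam R (src R e')" "(src R e', a') \<in> C"
    "factor R (src R e') a' \<subseteq> iota_image R e'"
    using ea unfolding edge_adj_def iota_image_def pair by blast
  have e'E: "e' \<in> Es R" using e' eE by auto
  obtain b where b: "b \<in> VEdg R e'" "a' = factor_emb R e' b"
    using factor_in_iota_image_is_emb[OF e'E e'(2,4)] by blast
  then have b': "b \<in> VEdg R e" using e' VEdg_bar[OF eE] by auto
  let ?p = "(src R e, factor_emb R e b)" and ?q = "(tgt R e, factor_emb R (bar R e) b)"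
  have "sim R ?p ?q"
    unfolding sim_def using eE factor_emb_in[OF eE b'] factor_emb_in[OF bar_Es[OF eE]] b' VEdg_bar[OF eE]
      phiset_factor_emb[OF eE b'] by auto
  then have "?q \<in> psi_class R ?p" unfolding psi_class_def by auto
  moreover have "?p \<in> C \<or> ?q \<in> C" using e' b eE by auto
  ultimately have "?p \<in> C" "?q \<in> C"
    using is_psi_class_eq[OF C] psi_class_eq psi_class_refl by metis+
  then show ?thesis
    using factor_emb_in[OF eE b'] factor_emb_in[OF bar_Es[OF eE]] b' VEdg_bar[OF eE]
      factor_emb_subset_iota_image[OF eE b'] phiset_factor_emb[OF eE b'] eE
    by (intro exI[of _ "factor_emb R e b"] exI[of _ "factor_emb R (bar R e) b"]) auto
qed

lemma from_rep_edge:
  assumes e: "e \<in> Es R" and a: "a \<in> VGam R (src R e)" and b: "b \<in> VGam R (tgt R e)"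
    and C: "is_psi_class R C" "(src R e, a) \<in> C" "(tgt R e, b) \<in> C"
    and sub: "factor R (src R e) a \<subseteq> iota_image R e"
    and ph: "phiset R e (factor R (src R e) a) = factor R (tgt R e) b"
    and y: "y \<in> carrier (FV R (fst (some_elem C)) (snd (some_elem C)))"
  shows "\<exists>g\<in>carrier (Ge R e). from_rep R C (src R e) y = iota R e g \<and> from_rep R C (tgt R e) y = iota R (bar R e) g"
proof -
  have s: "src R e \<in> Vs R" and t: "tgt R e \<in> Vs R" using e by auto
  define p where "p = some_elem C"
  note ss = from_rep_spec[OF s a is_psi_class_eq[OF C(1,2)] p_def]
  note st = from_rep_spec[OF t b is_psi_class_eq[OF C(1,3)] p_def]
  have yp: "y \<in> carrier (FV R (fst p) (snd p))" using y p_def by simp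
  obtain c where c: "carries R (tgt R e) b c (fst p) (snd p)"
    using some_elem_psi_class_carried[OF t b] is_psi_class_eq[OF C(1,3)] p_def by blast
  have e1: "carries R (src R e) a [e] (tgt R e) b" using e b ph by (simp add: carries_def)
  have src: "from_rep R C (src R e) y \<in> factor R (src R e) a" using ss yp by blast
  then obtain g where g: "g \<in> carrier (Ge R e)" "from_rep R C (src R e) y = iota R e g"
    using sub by (auto simp: iota_image_def)
  have "carries R (src R e) a (e # c) (fst p) (snd p)" using carries_append[OF e1 c] by simp
  then have "phielt_path R (e # c) (from_rep R C (src R e) y) = Gv_class R (fst p) [(snd p, y)]"
    using ss[OF yp] by blast
  then have "phielt_path R c (phielt R e (from_rep R C (src R e) y)) = Gv_class R (fst p) [(snd p, y)]"
    by simp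
  moreover have "phielt_path R c (from_rep R C (tgt R e) y) = Gv_class R (fst p) [(snd p, y)]"
    using st[OF yp] c by blast
  moreover have "phielt R e (from_rep R C (src R e) y) \<in> factor R (tgt R e) b"
    using carries_mem[OF e1 s a src] by simp
  ultimately have "phielt R e (from_rep R C (src R e) y) = from_rep R C (tgt R e) y"
    using carries_inj[OF c t b] st[OF yp] by metis
  then show ?thesis using g phielt_iota[OF e g(1)] by auto
qed

lemma lift_letter_path:
  assumes l: "[l] \<in> psi_words R" and v: "v \<in> Vs R"
  shows "word_path R v (word_end R v (lift_letter R l v)) (lift_letter R l v) \<and> word_end R v (lift_letter R l v) \<in> Vs R"
proof -
  obtain Xv x where lx: "l = (Xv, x)" and Xv: "Xv \<in> Psi_V R" and x: "x \<in> carrier (Psi_F R Xv)"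
    using l by (cases l) auto
  from Psi_V_cases[OF Xv] show ?thesis
  proof (elim disjE exE conjE bexE)
    fix C assume XC: "Xv = Inl C" and C: "is_psi_class R C"
    obtain y where y: "x = Inl y" "y \<in> carrier (FV R (fst (some_elem C)) (snd (some_elem C)))"
      using Psi_F_Inl_carrier x XC by blast
    show ?thesis
    proof (cases "\<exists>a. (v, a) \<in> C \<and> a \<in> VGam R v")
      case True
      then obtain a where a: "(v, a) \<in> C" "a \<in> VGam R v" by blast
      then show ?thesis using lift_letter_Inl[OF v a] from_rep_in[OF v a C y(2)] lx XC y v by simp
    next
      case False
      then show ?thesis using lift_letter_Inl_none[OF False] lx XC v by simp
    qed
  next
    fix e0 assume e0: "e0 \<in> Es R" and XP: "Xv = Inr {e0, bar R e0}"
    show ?thesis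
    proof (cases "x = Inr 1 \<and> (\<exists>e\<in>{e0, bar R e0}. e \<in> Es R \<and> src R e = v)")
      case True
      then obtain e where "e \<in> {e0, bar R e0}" "e \<in> Es R" "src R e = v" "x = Inr 1" by blast
      then show ?thesis using lift_letter_Inr_1[OF e0] lx XP by auto
    qed (use lx XP v in \<open>auto simp: lift_letter_def\<close>)
  qed
qed

lemma lift_word_path:
  "ws \<in> psi_words R \<Longrightarrow> v \<in> Vs R \<Longrightarrow>
    word_path R v (word_end R v (lift_word R ws v)) (lift_word R ws v) \<and> word_end R v (lift_word R ws v) \<in> Vs R"
proof (induction ws arbitrary: v)
  case (Cons l ws)
  have l: "[l] \<in> psi_words R" and ws: "ws \<in> psi_words R" using Cons.prems by auto
  note t = lift_letter_path[OF l Cons.prems(2)]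
  then show ?case using Cons.IH[OF ws conjunct2[OF t]] by (auto simp: word_path_append)
qed simp

end

context ragg_conditions
begin

lemma lift_mult_class:
  assumes C: "is_psi_class R C" and x: "x \<in> carrier (Psi_F R (Inl C))"
    and y: "y \<in> carrier (Psi_F R (Inl C))"
    and d: "word_path R \<omega> m \<delta>" and m: "m \<in> Vs R"
  shows "path_equiv R \<omega> (\<delta> @ lift_word R [(Inl C, x), (Inl C, y)] m)
    (\<delta> @ lift_word R [(Inl C, x \<otimes>\<^bsub>Psi_F R (Inl C)\<^esub> y)] m)"
proof -
  obtain x0 y0 where x0: "x = Inl x0" "x0 \<in> carrier (FV R (fst (some_elem C)) (snd (some_elem C)))"
    and y0: "y = Inl y0" "y0 \<in> carrier (FV R (fst (some_elem C)) (snd (some_elem C)))"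
    using Psi_F_Inl_carrier x y by metis
  have xy: "x \<otimes>\<^bsub>Psi_F R (Inl C)\<^esub> y = Inl (x0 \<otimes>\<^bsub>FV R (fst (some_elem C)) (snd (some_elem C))\<^esub> y0)"
    using x0 y0 by (simp add: Psi_F_Inl transport_mult)
  show ?thesis
  proof (cases "\<exists>a. (m, a) \<in> C \<and> a \<in> VGam R m")
    case True
    then obtain a where a: "(m, a) \<in> C" "a \<in> VGam R m" by blast
    have "from_rep R C m (x0 \<otimes>\<^bsub>FV R (fst (some_elem C)) (snd (some_elem C))\<^esub> y0)
        = from_rep R C m x0 \<otimes>\<^bsub>Gv R m\<^esub> from_rep R C m y0"
      using from_rep_mult[OF m a(2) is_psi_class_eq[OF C a(1)] refl x0(2) y0(2)] .
    then show ?thesis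
      using path_equiv_mult[OF d m] from_rep_in[OF m a C x0(2)] from_rep_in[OF m a C y0(2)]
        lift_letter_Inl[OF m a] x0 y0 xy by simp
  next
    case False
    then show ?thesis using lift_letter_Inl_none[OF False] x0 y0 xy by simp
  qed
qed

lemma lift_mult_edge:
  assumes e0: "e0 \<in> Es R" and x: "x \<in> carrier (Psi_F R (Inr {e0, bar R e0}))"
    and y: "y \<in> carrier (Psi_F R (Inr {e0, bar R e0}))" and d: "word_path R \<omega> m \<delta>"
  shows "path_equiv R \<omega> (\<delta> @ lift_word R [(Inr {e0, bar R e0}, x), (Inr {e0, bar R e0}, y)] m)
    (\<delta> @ lift_word R [(Inr {e0, bar R e0}, x \<otimes>\<^bsub>Psi_F R (Inr {e0, bar R e0})\<^esub> y)] m)"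
proof -
  let ?P = "{e0, bar R e0}"
  have xs: "x = Inr 0 \<or> x = Inr 1" and ys: "y = Inr 0 \<or> y = Inr 1" using Psi_F_Inr_cases x y by auto
  have mult: "Inr i \<otimes>\<^bsub>Psi_F R (Inr ?P)\<^esub> Inr j = Inr ((i + j) mod 2)" if "i \<in> {0, 1}" "j \<in> {0, 1}"
    for i j :: int
    by (rule Psi_F_Inr_mult[OF that])
  show ?thesis
  proof (cases "\<exists>e\<in>?P. e \<in> Es R \<and> src R e = m")
    case True
    then obtain e where e: "e \<in> ?P" "e \<in> Es R" "src R e = m" by blast
    have "bar R e \<in> ?P" using e e0 by auto
    then have "lift_letter R (Inr ?P, Inr 1) (tgt R e) = [Arr (bar R e)]"
      using lift_letter_Inr_1[OF e0] e(2) by simp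
    moreover have "path_equiv R \<omega> (\<delta> @ [Arr e, Arr (bar R e)]) \<delta>"
      using path_equiv_basic[of "[Arr e, Arr (bar R e)]" "[]" \<omega> m \<delta> m] d e
      by (simp add: groupoid_basic_def)
    ultimately show ?thesis
      using xs ys lift_letter_Inr_1[OF e0 e(1,3)] mult[of 0 0] mult[of 0 1] mult[of 1 0] mult[of 1 1]
      by (auto simp: lift_letter_Inr_0)
  next
    case False
    then show ?thesis by (simp add: lift_letter_Inr_none)
  qed
qed

lemma lift_mult:
  "Xv \<in> Psi_V R \<Longrightarrow> x \<in> carrier (Psi_F R Xv) \<Longrightarrow> y \<in> carrier (Psi_F R Xv) \<Longrightarrow>
    word_path R \<omega> m \<delta> \<Longrightarrow> m \<in> Vs R \<Longrightarrow>
    path_equiv R \<omega> (\<delta> @ lift_word R [(Xv, x), (Xv, y)] m) (\<delta> @ lift_word R [(Xv, x \<otimes>\<^bsub>Psi_F R Xv\<^esub> y)] m)"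
  using Psi_V_cases lift_mult_class lift_mult_edge by blast

lemma lift_one:
  assumes Xv: "Xv \<in> Psi_V R" and d: "word_path R \<omega> m \<delta>" and m: "m \<in> Vs R"
  shows "path_equiv R \<omega> (\<delta> @ lift_word R [(Xv, \<one>\<^bsub>Psi_F R Xv\<^esub>)] m) \<delta>"
  using Psi_V_cases[OF Xv]
proof (elim disjE exE conjE bexE)
  fix C assume XC: "Xv = Inl C" and C: "is_psi_class R C"
  have one: "\<one>\<^bsub>Psi_F R Xv\<^esub> = Inl \<one>\<^bsub>FV R (fst (some_elem C)) (snd (some_elem C))\<^esub>"
    using XC by (simp add: Psi_F_Inl transport_one)
  show ?thesis
  proof (cases "\<exists>a. (m, a) \<in> C \<and> a \<in> VGam R m")
    case True
    then obtain a where a: "(m, a) \<in> C" "a \<in> VGam R m" by blast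
    have "from_rep R C m \<one>\<^bsub>FV R (fst (some_elem C)) (snd (some_elem C))\<^esub> = \<one>\<^bsub>Gv R m\<^esub>"
      using from_rep_one[OF m a(2) is_psi_class_eq[OF C a(1)] refl] by (simp add: Gv_class_Nil)
    then show ?thesis using lift_letter_Inl[OF m a] XC one path_equiv_one[OF d m] by simp
  next
    case False
    then show ?thesis using lift_letter_Inl_none[OF False] XC one by simp
  qed
qed (simp add: Psi_F_Inr_one lift_letter_Inr_0)

text \<open>Condition (ii) makes the lifts of letters of adjacent classes commute.\<close>

lemma from_rep_comm:
  assumes C: "is_psi_class R C" and D: "is_psi_class R D" and adj: "Psi_adj R (Inl C) (Inl D)"
    and m: "m \<in> Vs R" and a: "(m, a) \<in> C" "a \<in> VGam R m" and b: "(m, b) \<in> D" "b \<in> VGam R m"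
    and x: "x \<in> carrier (FV R (fst (some_elem C)) (snd (some_elem C)))"
    and y: "y \<in> carrier (FV R (fst (some_elem D)) (snd (some_elem D)))"
  shows "from_rep R C m x \<otimes>\<^bsub>Gv R m\<^esub> from_rep R D m y = from_rep R D m y \<otimes>\<^bsub>Gv R m\<^esub> from_rep R C m x"
proof -
  obtain u a1 a2 where w: "(u, a1) \<in> C" "(u, a2) \<in> D" "u \<in> Vs R" "adjG R u a1 a2"
    using adj unfolding Psi_adj_def by auto
  have "a1 \<in> VGam R u" "a2 \<in> VGam R u"
    using w(4) simplicial_VGam[OF w(3)] by (auto simp: simplicial_def)
  then have ab: "adjG R m a b"
    using psi_class_adj[OF w(3) m _ _ w(4) a(2) b(2)] a(1) b(1)
      is_psi_class_eq[OF C w(1)] is_psi_class_eq[OF D w(2)] by simp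
  obtain x1 where x1: "x1 \<in> carrier (FV R m a)" "from_rep R C m x = Gv_class R m [(a, x1)]"
    using from_rep_in[OF m a C x] by (auto simp: factor_Gv_class)
  obtain y1 where y1: "y1 \<in> carrier (FV R m b)" "from_rep R D m y = Gv_class R m [(b, y1)]"
    using from_rep_in[OF m b D y] by (auto simp: factor_Gv_class)
  show ?thesis
    unfolding x1(2) y1(2) Gv_class_def Gv_def
    by (rule gp_class_letter_comm[where adj = "adjG R m" and I = "VGam R m" and F = "FV R m", OF ab a(2) b(2) x1(1) y1(1)])
qed

lemma lift_comm_classes:
  assumes C: "is_psi_class R C" and D: "is_psi_class R D" and adj: "Psi_adj R (Inl C) (Inl D)"
    and x: "x \<in> carrier (Psi_F R (Inl C))" and y: "y \<in> carrier (Psi_F R (Inl D))"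
    and d: "word_path R \<omega> m \<delta>" and m: "m \<in> Vs R"
  shows "path_equiv R \<omega> (\<delta> @ lift_word R [(Inl C, x), (Inl D, y)] m) (\<delta> @ lift_word R [(Inl D, y), (Inl C, x)] m)"
proof -
  obtain x0 where x0: "x = Inl x0" "x0 \<in> carrier (FV R (fst (some_elem C)) (snd (some_elem C)))"
    using Psi_F_Inl_carrier[OF x] by blast
  obtain y0 where y0: "y = Inl y0" "y0 \<in> carrier (FV R (fst (some_elem D)) (snd (some_elem D)))"
    using Psi_F_Inl_carrier[OF y] by blast
  show ?thesis
  proof (cases "(\<exists>a. (m, a) \<in> C \<and> a \<in> VGam R m) \<and> (\<exists>b. (m, b) \<in> D \<and> b \<in> VGam R m)")
    case True
    then obtain a b where a: "(m, a) \<in> C" "a \<in> VGam R m" and b: "(m, b) \<in> D" "b \<in> VGam R m" by blast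
    let ?g = "from_rep R C m x0" and ?h = "from_rep R D m y0"
    have g: "?g \<in> carrier (Gv R m)" and h: "?h \<in> carrier (Gv R m)"
      using from_rep_in[OF m a C x0(2)] from_rep_in[OF m b D y0(2)] by auto
    have "path_equiv R \<omega> (\<delta> @ [Elt m ?g, Elt m ?h]) (\<delta> @ [Elt m (?g \<otimes>\<^bsub>Gv R m\<^esub> ?h)])"
      by (rule path_equiv_mult[OF d m g h])
    then have "path_equiv R \<omega> (\<delta> @ [Elt m ?g, Elt m ?h]) (\<delta> @ [Elt m (?h \<otimes>\<^bsub>Gv R m\<^esub> ?g)])"
      unfolding from_rep_comm[OF C D adj m a b x0(2) y0(2)] .
    then have "path_equiv R \<omega> (\<delta> @ [Elt m ?g, Elt m ?h]) (\<delta> @ [Elt m ?h, Elt m ?g])"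
      by (rule qrel_trans[OF _ qrel_sym[OF path_equiv_mult[OF d m h g]]])
    then show ?thesis using lift_letter_Inl[OF m a] lift_letter_Inl[OF m b] x0 y0 by simp
  next
    case False
    then have "lift_letter R (Inl C, x) m = [] \<or> lift_letter R (Inl D, y) m = []"
      by (auto simp: lift_letter_def)
    then show ?thesis by (auto simp: lift_letter_Inl_end)
  qed
qed

lemma lift_comm_class_edge:
  assumes C: "is_psi_class R C" and e0: "e0 \<in> Es R" and ea: "edge_adj R {e0, bar R e0} C"
    and x: "x \<in> carrier (Psi_F R (Inl C))" and y: "y \<in> carrier (Psi_F R (Inr {e0, bar R e0}))"
    and d: "word_path R \<omega> m \<delta>" and m: "m \<in> Vs R"
  shows "path_equiv R \<omega> (\<delta> @ lift_word R [(Inl C, x), (Inr {e0, bar R e0}, y)] m)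
    (\<delta> @ lift_word R [(Inr {e0, bar R e0}, y), (Inl C, x)] m)"
proof -
  let ?P = "{e0, bar R e0}"
  obtain x0 where x0: "x = Inl x0" "x0 \<in> carrier (FV R (fst (some_elem C)) (snd (some_elem C)))"
    using Psi_F_Inl_carrier[OF x] by blast
  show ?thesis
  proof (cases "\<exists>e\<in>?P. e \<in> Es R \<and> src R e = m")
    case True
    then obtain e where e: "e \<in> ?P" "e \<in> Es R" "src R e = m" by blast
    obtain a b where ab: "a \<in> VGam R (src R e)" "b \<in> VGam R (tgt R e)" "(src R e, a) \<in> C" "(tgt R e, b) \<in> C"
      "factor R (src R e) a \<subseteq> iota_image R e" "phiset R e (factor R (src R e) a) = factor R (tgt R e) b"
      using edge_adj_edge[OF e0 e(1) ea C] by blast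
    have t: "tgt R e \<in> Vs R" using e by simp
    have lm: "lift_letter R (Inl C, x) m = [Elt m (from_rep R C m x0)]"
      using lift_letter_Inl[OF m] ab(1,3) e(3) x0 by simp
    from Psi_F_Inr_cases[OF y] show ?thesis
    proof
      assume "y = Inr 0"
      then show ?thesis using lm by (simp add: lift_letter_Inr_0 lift_letter_Inl_end)
    next
      assume y1: "y = Inr 1"
      obtain g where g: "g \<in> carrier (Ge R e)" "from_rep R C (src R e) x0 = iota R e g"
        "from_rep R C (tgt R e) x0 = iota R (bar R e) g"
        using from_rep_edge[OF e(2) ab(1,2) C ab(3,4,5,6) x0(2)] by blast
      have "path_equiv R \<omega> (\<delta> @ [Elt (src R e) (iota R e g), Arr e]) (\<delta> @ [Arr e, Elt (tgt R e) (iota R (bar R e) g)])"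
        using e m t d iota_closed[OF e(2) g(1)] iota_bar_closed[OF e(2) g(1)] g(1)
        by (intro path_equiv_basic[where m' = "tgt R e"]) (auto simp: groupoid_basic_def)
      then show ?thesis
        using lm lift_letter_Inl[OF t ab(4) ab(2)] lift_letter_Inr_1[OF e0 e(1,3)] x0 y1 g e(3)
        by (simp add: lift_letter_Inl_end)
    qed
  next
    case False
    then show ?thesis by (simp add: lift_letter_Inr_none lift_letter_Inl_end)
  qed
qed

lemma lift_gp_basic:
  assumes b: "gp_basic (Psi_V R) (Psi_adj R) (Psi_F R) l r" and d: "word_path R \<omega> m \<delta>"
    and m: "m \<in> Vs R"
  shows "path_equiv R \<omega> (\<delta> @ lift_word R l m) (\<delta> @ lift_word R r m)"
  using b unfolding gp_basic_def
proof (elim disjE bexE conjE)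
  fix Xv Yv x y assume Xv: "Xv \<in> Psi_V R" and Yv: "Yv \<in> Psi_V R" and adj: "Psi_adj R Xv Yv"
    and x: "x \<in> carrier (Psi_F R Xv)" and y: "y \<in> carrier (Psi_F R Yv)"
    and l: "l = [(Xv, x), (Yv, y)]" and r: "r = [(Yv, y), (Xv, x)]"
  from Psi_V_cases[OF Xv] Psi_V_cases[OF Yv] show ?thesis
  proof (elim disjE exE conjE bexE)
    fix C D assume "Xv = Inl C" "is_psi_class R C" "Yv = Inl D" "is_psi_class R D"
    then show ?thesis using lift_comm_classes[OF _ _ _ _ _ d m] adj x y l r by simp
  next
    fix C e0 assume "Xv = Inl C" "is_psi_class R C" "e0 \<in> Es R" "Yv = Inr {e0, bar R e0}"
    then show ?thesis
      using lift_comm_class_edge[OF _ _ _ _ _ d m] adj x y l r by (simp add: Psi_adj_def)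
  next
    fix C e0 assume "Yv = Inl C" "is_psi_class R C" "e0 \<in> Es R" "Xv = Inr {e0, bar R e0}"
    then show ?thesis
      using qrel_sym[OF lift_comm_class_edge[OF _ _ _ _ _ d m]] adj x y l r
      by (simp add: Psi_adj_def)
  next
    fix e0 e1 assume "Xv = Inr {e0, bar R e0}" "Yv = Inr {e1, bar R e1}"
    then show ?thesis using adj by (simp add: Psi_adj_def)
  qed
qed (use lift_mult[OF _ _ _ d m] lift_one[OF _ d m] in simp_all)

end

context ragg_conditions
begin

lemma lift_rewrite_step:
  assumes b: "gp_basic (Psi_V R) (Psi_adj R) (Psi_F R) l r"
    and w: "U @ l @ V \<in> psi_words R" "U @ r @ V \<in> psi_words R"
    and d: "word_path R \<omega> m \<delta>" and m: "m \<in> Vs R"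
  shows "path_equiv R \<omega> (\<delta> @ lift_word R (U @ l @ V) m) (\<delta> @ lift_word R (U @ r @ V) m)"
proof -
  have U: "U \<in> psi_words R" and l: "l \<in> psi_words R" and V: "V \<in> psi_words R" and r: "r \<in> psi_words R"
    using w by auto
  define m1 where "m1 = word_end R m (lift_word R U m)"
  define \<delta>1 where "\<delta>1 = \<delta> @ lift_word R U m"
  have m1: "word_path R m m1 (lift_word R U m)" "m1 \<in> Vs R"
    using lift_word_path[OF U m] m1_def by auto
  have d1: "word_path R \<omega> m1 \<delta>1" unfolding \<delta>1_def word_path_append using d m1 by blast
  define m2 where "m2 = word_end R m1 (lift_word R l m1)"
  have m2: "word_path R m1 m2 (lift_word R l m1)" "m2 \<in> Vs R"
    using lift_word_path[OF l m1(2)] m2_def by auto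
  have q: "path_equiv R \<omega> (\<delta>1 @ lift_word R l m1) (\<delta>1 @ lift_word R r m1)"
    using lift_gp_basic[OF b d1 m1(2)] .
  have dl: "word_path R \<omega> m2 (\<delta>1 @ lift_word R l m1)"
    unfolding word_path_append using d1 m2 by blast
  then have "word_path R \<omega> m2 (\<delta>1 @ lift_word R r m1)" using path_equiv_end[OF q] by blast
  moreover have "word_path R \<omega> (word_end R m1 (lift_word R r m1)) (\<delta>1 @ lift_word R r m1)"
    unfolding word_path_append using d1 lift_word_path[OF r m1(2)] by blast
  ultimately have m2': "word_end R m1 (lift_word R r m1) = m2" using word_path_unique_end by metis
  have "word_path R m2 (word_end R m2 (lift_word R V m2)) (lift_word R V m2)"
    using lift_word_path[OF V m2(2)] by blast
  from path_equiv_append[OF q dl this]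
  have "path_equiv R \<omega> ((\<delta>1 @ lift_word R l m1) @ lift_word R V m2) ((\<delta>1 @ lift_word R r m1) @ lift_word R V m2)" .
  moreover have "\<delta> @ lift_word R (U @ l @ V) m = (\<delta>1 @ lift_word R l m1) @ lift_word R V m2"
    by (simp add: lift_word_append \<delta>1_def m1_def m2_def)
  moreover have "\<delta> @ lift_word R (U @ r @ V) m = (\<delta>1 @ lift_word R r m1) @ lift_word R V m2"
    using m2' by (simp add: lift_word_append \<delta>1_def m1_def)
  ultimately show ?thesis by simp
qed

lemma lift_word_psi_equiv:
  assumes "psi_equiv R ws ws'" and d: "word_path R \<omega> m \<delta>" and m: "m \<in> Vs R"
  shows "path_equiv R \<omega> (\<delta> @ lift_word R ws m) (\<delta> @ lift_word R ws' m)"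
  using assms(1) unfolding gp_equiv_def
  by (rule qrel_map[rotated]) (rule lift_rewrite_step[OF _ _ _ d m])

lemma lift_word_psi_word_Gv:
  "m \<in> Vs R \<Longrightarrow> ws \<in> gp_words (VGam R m) (FV R m) \<Longrightarrow>
    lift_word R (psi_word_Gv R m ws) m = map (\<lambda>p. Elt m (Gv_class R m [p])) ws"
proof (induction ws)
  case (Cons p ws)
  obtain a x where p: "p = (a, x)" and a: "a \<in> VGam R m" and x: "x \<in> carrier (FV R m a)"
    using Cons.prems(2) by (cases p) auto
  have "lift_letter R (Inl (psi_class R (m, a)), Inl (to_rep R m a x)) m = [Elt m (Gv_class R m [(a, x)])]"
    using lift_letter_Inl[OF Cons.prems(1) psi_class_refl[of "(m, a)" R] a] from_rep_to_rep[OF Cons.prems(1) a x]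
    by simp
  then show ?case using Cons p by (simp add: psi_word_Gv_def)
qed (simp add: psi_word_Gv_def)

lemma path_equiv_letters:
  "m \<in> Vs R \<Longrightarrow> ws \<in> gp_words (VGam R m) (FV R m) \<Longrightarrow> word_path R \<omega> m \<delta> \<Longrightarrow>
    path_equiv R \<omega> (\<delta> @ map (\<lambda>p. Elt m (Gv_class R m [p])) ws) (\<delta> @ [Elt m (Gv_class R m ws)])"
proof (induction ws arbitrary: \<delta>)
  case Nil
  then show ?case using qrel_sym[OF path_equiv_one] by (simp add: Gv_class_Nil)
next
  case (Cons p ws)
  have m: "m \<in> Vs R" and p: "[p] \<in> gp_words (VGam R m) (FV R m)" and ws: "ws \<in> gp_words (VGam R m) (FV R m)"
    using Cons.prems by auto
  have cp: "Gv_class R m [p] \<in> carrier (Gv R m)" and cw: "Gv_class R m ws \<in> carrier (Gv R m)"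
    using p ws by (auto simp: Gv_carrier)
  have "word_path R \<omega> m (\<delta> @ [Elt m (Gv_class R m [p])])"
    unfolding word_path_append using Cons.prems(3) cp m by auto
  from Cons.IH[OF m ws this] path_equiv_mult[OF Cons.prems(3) m cp cw] show ?case
    using qrel_trans Gv_class_mult[OF p ws] by fastforce
qed

lemma lift_psi_word_Gv_some_elem:
  assumes m: "m \<in> Vs R" and g: "g \<in> carrier (Gv R m)" and d: "word_path R \<omega> m \<delta>"
  shows "word_end R m (lift_word R (psi_word_Gv R m (some_elem g)) m) = m"
    and "word_path R \<omega> m (\<delta> @ lift_word R (psi_word_Gv R m (some_elem g)) m)"
    and "path_equiv R \<omega> (\<delta> @ lift_word R (psi_word_Gv R m (some_elem g)) m) (\<delta> @ [Elt m g])"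
proof -
  note sg = some_elem_Gv[OF g]
  have letters: "word_path R m m (map (\<lambda>p. Elt m (Gv_class R m [p])) ws)"
    if "ws \<in> gp_words (VGam R m) (FV R m)" for ws
    using that m by (induction ws) (auto simp: Gv_carrier)
  then show "word_end R m (lift_word R (psi_word_Gv R m (some_elem g)) m) = m"
    using lift_word_psi_word_Gv[OF m] sg word_path_word_end by metis
  show "word_path R \<omega> m (\<delta> @ lift_word R (psi_word_Gv R m (some_elem g)) m)"
    unfolding word_path_append using d letters sg lift_word_psi_word_Gv[OF m] by metis
  show "path_equiv R \<omega> (\<delta> @ lift_word R (psi_word_Gv R m (some_elem g)) m) (\<delta> @ [Elt m g])"
    using path_equiv_letters[OF m _ d] sg lift_word_psi_word_Gv[OF m] by metis
qed

lemma lift_psi_word: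
  "\<omega> \<in> Vs R \<Longrightarrow> word_path R m m' w \<Longrightarrow> word_path R \<omega> m \<delta> \<Longrightarrow>
    path_equiv R \<omega> (\<delta> @ lift_word R (psi_word R w) m) (\<delta> @ w)"
proof (induction w arbitrary: m \<delta>)
  case (Cons l w)
  have m: "m \<in> Vs R" using word_path_Vs[OF Cons.prems(3,1)] .
  show ?case
  proof (cases l)
    case (Arr e)
    then have e: "e \<in> Es R" "src R e = m" and w: "word_path R (tgt R e) m' w"
      using Cons.prems(2) by auto
    have "word_path R \<omega> (tgt R e) (\<delta> @ [Arr e])"
      unfolding word_path_append using Cons.prems(3) e by auto
    from Cons.IH[OF Cons.prems(1) w this] show ?thesis
      using lift_letter_Inr_1[OF e(1) _ e(2)] Arr by (simp add: psi_word_Cons psi_letter_def)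
  next
    case (Elt x g)
    then have x: "x = m" and g: "g \<in> carrier (Gv R m)" and w: "word_path R m m' w"
      using Cons.prems(2) by auto
    note lifted = lift_psi_word_Gv_some_elem[OF m g Cons.prems(3)]
    have "psi_word R w \<in> psi_words R" using psi_word_psi_words word_path_valid_letter[OF w] by blast
    then have "word_path R m (word_end R m (lift_word R (psi_word R w) m)) (lift_word R (psi_word R w) m)"
      using lift_word_path[OF _ m] by blast
    from path_equiv_append[OF lifted(3) lifted(2) this]
    have "path_equiv R \<omega> (\<delta> @ lift_word R (psi_word R (l # w)) m) ((\<delta> @ [Elt m g]) @ lift_word R (psi_word R w) m)"
      using Elt x lifted(1) by (simp add: psi_word_Cons psi_letter_def lift_word_append)
    moreover have "word_path R \<omega> m (\<delta> @ [Elt m g])"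
      unfolding word_path_append using Cons.prems(3) m g by auto
    ultimately show ?thesis using Cons.IH[OF Cons.prems(1) w] qrel_trans Elt x by fastforce
  qed
qed simp

lemma loops_equiv_of_psi_equiv:
  assumes \<omega>: "\<omega> \<in> Vs R" and x: "x \<in> paths R \<omega> \<omega>" and y: "y \<in> paths R \<omega> \<omega>"
    and "psi_equiv R (psi_word R x) (psi_word R y)"
  shows "qrel (paths R \<omega> \<omega>) (rewrite_step (groupoid_basic R)) x y"
proof -
  have px: "word_path R \<omega> \<omega> x" and py: "word_path R \<omega> \<omega> y" using x y by (auto simp: paths_def)
  have "path_equiv R \<omega> (lift_word R (psi_word R x) \<omega>) (lift_word R (psi_word R y) \<omega>)"
    using lift_word_psi_equiv[OF assms(4), of \<omega> \<omega> "[]"] \<omega> by simp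
  moreover have "path_equiv R \<omega> (lift_word R (psi_word R x) \<omega>) x"
    using lift_psi_word[OF \<omega> px, of "[]"] by simp
  moreover have "path_equiv R \<omega> (lift_word R (psi_word R y) \<omega>) y"
    using lift_psi_word[OF \<omega> py, of "[]"] by simp
  ultimately have "path_equiv R \<omega> x y" using qrel_sym qrel_trans by metis
  then show ?thesis using path_equiv_paths px by blast
qed

end

definition psi_hom :: "('v, 'e, 'a, 'g) ragg \<Rightarrow> 'v \<Rightarrow> ('v, 'e, ('a \<times> 'g) list set) gletter list set
    \<Rightarrow> ((('v \<times> 'a) set + 'e set) \<times> ('g + int)) list set" where
  "psi_hom R \<omega> A = gp_class (Psi_V R) (Psi_adj R) (Psi_F R) (psi_word R (some_elem A))"

context ragg_conditions
begin

lemma psi_hom_class: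
  assumes w: "w \<in> paths R \<omega> \<omega>"
  shows "psi_hom R \<omega> (qclass (paths R \<omega> \<omega>) (rewrite_step (groupoid_basic R)) w)
    = gp_class (Psi_V R) (Psi_adj R) (Psi_F R) (psi_word R w)"
proof -
  let ?q = "qclass (paths R \<omega> \<omega>) (rewrite_step (groupoid_basic R))"
  have "some_elem (?q w) \<in> paths R \<omega> \<omega>" "?q (some_elem (?q w)) = ?q w"
    using qclass_some_elem[OF w] by auto
  then have "qrel (paths R \<omega> \<omega>) (rewrite_step (groupoid_basic R)) (some_elem (?q w)) w"
    using qclass_eq_iff w by metis
  then show ?thesis
    unfolding psi_hom_def paths_def by (intro gp_class_eqI psi_word_equiv)
qed

lemma psi_word_loop: "w \<in> paths R \<omega> \<omega> \<Longrightarrow> psi_word R w \<in> psi_words R"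
  unfolding paths_def using psi_word_psi_words[OF word_path_valid_letter] by blast

lemma psi_hom_hom: "psi_hom R \<omega> \<in> hom (fund_group R \<omega>) (Psi_GP R)"
proof (rule homI)
  fix A assume "A \<in> carrier (fund_group R \<omega>)"
  then show "psi_hom R \<omega> A \<in> carrier (Psi_GP R)"
    using psi_hom_class psi_word_loop
    by (auto simp: fund_group_paths quot_carrier Psi_GP_def gp_class_carrier)
next
  fix A B assume "A \<in> carrier (fund_group R \<omega>)" "B \<in> carrier (fund_group R \<omega>)"
  then obtain x y where "x \<in> paths R \<omega> \<omega>" "y \<in> paths R \<omega> \<omega>"
    "A = qclass (paths R \<omega> \<omega>) (rewrite_step (groupoid_basic R)) x"
    "B = qclass (paths R \<omega> \<omega>) (rewrite_step (groupoid_basic R)) y"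
    by (auto simp: fund_group_paths quot_carrier)
  moreover from this have "x @ y \<in> paths R \<omega> \<omega>"
    using paths_app_closed[of R \<omega>] unfolding app_closed_def by blast
  ultimately show "psi_hom R \<omega> (A \<otimes>\<^bsub>fund_group R \<omega>\<^esub> B) = psi_hom R \<omega> A \<otimes>\<^bsub>Psi_GP R\<^esub> psi_hom R \<omega> B"
    using psi_word_loop
    by (simp add: fund_group_paths quot_mult[OF paths_app_closed] psi_hom_class Psi_GP_def gp_class_mult)
qed

lemma psi_hom_inj: "\<omega> \<in> Vs R \<Longrightarrow> inj_on (psi_hom R \<omega>) (carrier (fund_group R \<omega>))"
proof (rule inj_onI)
  fix A B assume \<omega>: "\<omega> \<in> Vs R" and "A \<in> carrier (fund_group R \<omega>)" "B \<in> carrier (fund_group R \<omega>)"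
    and eq: "psi_hom R \<omega> A = psi_hom R \<omega> B"
  then obtain x y where xy: "x \<in> paths R \<omega> \<omega>" "y \<in> paths R \<omega> \<omega>"
    and A: "A = qclass (paths R \<omega> \<omega>) (rewrite_step (groupoid_basic R)) x"
    and B: "B = qclass (paths R \<omega> \<omega>) (rewrite_step (groupoid_basic R)) y"
    by (auto simp: fund_group_paths quot_carrier)
  then have "psi_equiv R (psi_word R x) (psi_word R y)"
    using eq psi_hom_class psi_word_loop by (simp add: gp_class_eq_iff)
  then show "A = B" using loops_equiv_of_psi_equiv[OF \<omega> xy] A B by (simp add: qclass_eqI)
qed

end

theorem proposition4p12:
  fixes R :: "('v, 'e, 'a, 'g) ragg" and \<omega> :: 'v
  assumes "is_ragg R"
    and "cond_i R" and "cond_ii R" and "cond_iii R" and "cond_iv R"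
    and "\<omega> \<in> Vs R"
  shows "\<exists>h. h \<in> hom (fund_group R \<omega>) (Psi_GP R) \<and> inj_on h (carrier (fund_group R \<omega>))"
proof -
  interpret ragg_conditions R
    using assms(1-5) by (simp add: ragg_conditions_def ragg_conditions_axioms_def ragg_setting_def)
  show ?thesis using psi_hom_hom psi_hom_inj[OF assms(6)] by blast
qed

end
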